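(* Let $\theta\in(0,\frac{\pi}{2}]$, $1\le k\le n-1$, $f$ a positive smooth function on $\mathcal{C}_\theta$, and $h$ a positive admissible solution of $$\frac{\sigma_n(\nabla^2h+h\sigma)}{\sigma_{n-k}(\nabla^2h+h\sigma)}=f^{-1}\ \text{in }\mathcal{C}_\theta,\qquad \nabla_\mu h=\cot\theta\, h\ \text{on }\partial\mathcal{C}_\theta.$$ Then $\min_{\mathcal{C}_\theta}h\le C$ for a positive constant $C$ depending only on $f$. Furthermore, if $h$ is moreover capillary even and is the support function of a strictly convex capillary hypersurface $\Sigma\subset\overline{\mathbb{R}^{n+1}_+}$, then the capillary inner radius of its convex body $\widehat\Sigma$ satisfies $\rho_-(\widehat\Sigma,\theta)\le C$.
   Context: $e=-E_{n+1}$, $\mathcal{C}_\theta=\{\xi\in\overline{\mathbb{R}^{n+1}_+}: |\xi-\cos\theta\,e|=1\}$ with round metric $\sigma$, gradient $\nabla$, Hessian $\nabla^2$; $\mu$ is the outward unit co-normal of $\partial\mathcal{C}_\theta$. $\sigma_m(A)$ is the $m$-th elementary symmetric function of the eigenvalues of $A$ w.r.t. $\sigma$. $h$ is admissible if $\nabla^2h+h\sigma>0$. Capillary even: $h(\xi)=h(\widehat\xi)$, $\widehat\xi=(-\xi_1,\dots,-\xi_n,\xi_{n+1})$. A capillary hypersurface $\Sigma$ is a compact hypersurface with boundary in $\overline{\mathbb{R}^{n+1}_+}$, interior in $\mathbb{R}^{n+1}_+$, boundary on $\partial\mathbb{R}^{n+1}_+$, with $\langle\nu,e\rangle=\cos(\pi-\theta)$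 on $\partial\Sigma$; for strictly convex $\Sigma$ the map $\widetilde\nu=\nu+\cos\theta\,e:\Sigma\to\mathcal{C}_\theta$ is a diffeomorphism and its support function is $h(\xi)=\langle\xi-\cos\theta\,e,\widetilde\nu^{-1}(\xi)\rangle$. $\widehat\Sigma$ is the region bounded by $\Sigma$ and $\partial\mathbb{R}^{n+1}_+$. With $\mathcal{C}_{r,\theta}(x_0)=\{x\in\overline{\mathbb{R}^{n+1}_+}:|x-(x_0+r\cos\theta\,e)|=r\}$ and $\widehat{\mathcal{C}_{r,\theta}(x_0)}$ the region it bounds with $\partial\mathbb{R}^{n+1}_+$, $\rho_-(\widehat\Sigma,\theta)=\sup\{r>0:\widehat{\mathcal{C}_{r,\theta}(x_0)}\subset\widehat\Sigma\text{ for some }x_0\in\partial\mathbb{R}^{n+1}_+\}$. *)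

theory Defs
  imports "HOL-Analysis.Analysis"
begin

text \<open>Ambient space R^(n+1) is an abstract euclidean space 'a with DIM('a) = n+1.
  The fixed unit vector e = -E_(n+1) is minus a fixed basis vector.
  The closed upper half space is {x. x \<bullet> e \<le> 0}.\<close>

definition capE :: "'a::euclidean_space" where
  "capE = - (SOME b. b \<in> Basis)"

definition capc :: "real \<Rightarrow> 'a::euclidean_space" where
  "capc \<theta> = cos \<theta> *\<^sub>R capE"

definition cap :: "real \<Rightarrow> 'a::euclidean_space set" where
  "cap \<theta> = {\<xi>. \<xi> \<bullet> capE \<le> 0 \<and> norm (\<xi> - capc \<theta>) = 1}"

definition tang :: "real \<Rightarrow> 'a::euclidean_space \<Rightarrow> 'a set" where
  "tang \<theta> \<xi> = {u. u \<bullet> (\<xi> - capc \<theta>) = 0}"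

fun dd :: "('a::real_normed_vector \<Rightarrow> real) \<Rightarrow> 'a list \<Rightarrow> 'a \<Rightarrow> real" where
  "dd g [] = g"
| "dd g (v # vs) = (\<lambda>x. frechet_derivative (dd g vs) (at x) v)"

definition smooth_on :: "'a::real_normed_vector set \<Rightarrow> ('a \<Rightarrow> real) \<Rightarrow> bool" where
  "smooth_on U g \<longleftrightarrow> (\<forall>vs. dd g vs differentiable_on U)"

definition smooth_on_cap :: "real \<Rightarrow> ('a::euclidean_space \<Rightarrow> real) \<Rightarrow> bool" where
  "smooth_on_cap \<theta> h \<longleftrightarrow>
     (\<exists>U g. open U \<and> cap \<theta> \<subseteq> U \<and> smooth_on U g \<and> (\<forall>x\<in>cap \<theta>. g x = h x))"

definition cap_ext :: "real \<Rightarrow> ('a::euclidean_space \<Rightarrow> real) \<Rightarrow> 'a \<Rightarrow> real" where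
  "cap_ext \<theta> h = (SOME g. \<exists>U. open U \<and> cap \<theta> \<subseteq> U \<and> smooth_on U g \<and> (\<forall>x\<in>cap \<theta>. g x = h x))"

text \<open>The symmetric bilinear form (nabla^2 h + h sigma) at xi on the tangent space,
  via the Gauss formula for the unit sphere centred at cos theta e:
  Hess_S h (u,v) = D^2 g (u,v) - <Dg, N> <u,v>, N = xi - center.\<close>
definition sph_form :: "real \<Rightarrow> ('a::euclidean_space \<Rightarrow> real) \<Rightarrow> 'a \<Rightarrow> 'a \<Rightarrow> 'a \<Rightarrow> real" where
  "sph_form \<theta> h \<xi> u v =
     (let g = cap_ext \<theta> h in
       dd g [u, v] \<xi> - dd g [\<xi> - capc \<theta>] \<xi> * (u \<bullet> v) + h \<xi> * (u \<bullet> v))"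

text \<open>m-th elementary symmetric function of the eigenvalues of a symmetric bilinear form A
  on an N-dimensional subspace T, with respect to the induced metric.\<close>
definition sigma_form :: "nat \<Rightarrow> 'a::euclidean_space set \<Rightarrow> ('a \<Rightarrow> 'a \<Rightarrow> real) \<Rightarrow> nat \<Rightarrow> real" where
  "sigma_form N T A m = (SOME s. \<exists>b lam.
      (\<forall>i<N. b i \<in> T) \<and>
      (\<forall>i<N. \<forall>j<N. b i \<bullet> b j = (if i = j then 1 else 0)) \<and>
      (\<forall>i<N. \<forall>j<N. A (b i) (b j) = (if i = j then lam i else 0)) \<and>
      s = (\<Sum>S\<in>{S. S \<subseteq> {..<N} \<and> card S = m}. \<Prod>i\<in>S. lam i))"

definition sigma_cap :: "real \<Rightarrow> ('a::euclidean_space \<Rightarrow> real) \<Rightarrow> nat \<Rightarrow> 'a \<Rightarrow> real" where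
  "sigma_cap \<theta> h m \<xi> = sigma_form (DIM('a) - 1) (tang \<theta> \<xi>) (sph_form \<theta> h \<xi>) m"

definition admissible :: "real \<Rightarrow> ('a::euclidean_space \<Rightarrow> real) \<Rightarrow> bool" where
  "admissible \<theta> h \<longleftrightarrow>
     (\<forall>\<xi>\<in>cap \<theta>. \<forall>u\<in>tang \<theta> \<xi>. u \<noteq> 0 \<longrightarrow> sph_form \<theta> h \<xi> u u > 0)"

text \<open>Outward unit co-normal of the boundary of C_theta (normalised tangential projection of e).\<close>
definition conormal :: "real \<Rightarrow> 'a::euclidean_space \<Rightarrow> 'a" where
  "conormal \<theta> \<xi> =
     (let w = capE - (capE \<bullet> (\<xi> - capc \<theta>)) *\<^sub>R (\<xi> - capc \<theta>) in w /\<^sub>R norm w)"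

definition neumann_bc :: "real \<Rightarrow> ('a::euclidean_space \<Rightarrow> real) \<Rightarrow> bool" where
  "neumann_bc \<theta> h \<longleftrightarrow>
     (\<forall>\<xi>\<in>cap \<theta>. \<xi> \<bullet> capE = 0 \<longrightarrow> dd (cap_ext \<theta> h) [conormal \<theta> \<xi>] \<xi> = cot \<theta> * h \<xi>)"

text \<open>hat xi = (-xi_1,...,-xi_n, xi_(n+1)).\<close>
definition refl_e :: "'a::euclidean_space \<Rightarrow> 'a" where
  "refl_e \<xi> = (2 * (\<xi> \<bullet> capE)) *\<^sub>R capE - \<xi>"

definition capillary_even :: "real \<Rightarrow> ('a::euclidean_space \<Rightarrow> real) \<Rightarrow> bool" where
  "capillary_even \<theta> h \<longleftrightarrow> (\<forall>\<xi>\<in>cap \<theta>. h (refl_e \<xi>) = h \<xi>)"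

definition vdiff :: "real \<Rightarrow> ('a::euclidean_space \<Rightarrow> 'a) \<Rightarrow> 'a \<Rightarrow> 'a \<Rightarrow> 'a" where
  "vdiff \<theta> X \<xi> u = (\<Sum>b\<in>Basis. dd (cap_ext \<theta> (\<lambda>x. X x \<bullet> b)) [u] \<xi> *\<^sub>R b)"

text \<open>X : C_theta -> R^(n+1) is the inverse of the map nu + cos theta e of a strictly convex
  capillary hypersurface Sigma = X(C_theta): X is a smooth embedding of the cap, the interior
  goes into the open half space and the boundary into its boundary hyperplane, the outward unit
  normal of Sigma at X(xi) is xi - cos theta e (so nu + cos theta e = xi, and on the boundary
  <nu,e> = -cos theta = cos(pi-theta)), and the second fundamental form
  <d nu (u), dX(u)> = <u, dX(u)> is positive definite.\<close>
definition capillary_param :: "real \<Rightarrow> ('a::euclidean_space \<Rightarrow> 'a) \<Rightarrow> bool" where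
  "capillary_param \<theta> (X::'a \<Rightarrow> 'a) \<longleftrightarrow>
     (\<forall>b\<in>(Basis::'a set). smooth_on_cap \<theta> (\<lambda>x. X x \<bullet> b)) \<and>
     inj_on X (cap \<theta>) \<and>
     (\<forall>\<xi>\<in>cap \<theta>. \<xi> \<bullet> capE < 0 \<longrightarrow> X \<xi> \<bullet> capE < 0) \<and>
     (\<forall>\<xi>\<in>cap \<theta>. \<xi> \<bullet> capE = 0 \<longrightarrow> X \<xi> \<bullet> capE = 0) \<and>
     (\<forall>\<xi>\<in>cap \<theta>. \<forall>u\<in>tang \<theta> \<xi>. vdiff \<theta> X \<xi> u \<bullet> (\<xi> - capc \<theta>) = 0) \<and>
     (\<forall>\<xi>\<in>cap \<theta>. \<forall>u\<in>tang \<theta> \<xi>. u \<noteq> 0 \<longrightarrow> u \<bullet> vdiff \<theta> X \<xi> u > 0) \<and>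
     (\<forall>\<xi>\<in>(cap \<theta> :: 'a set). \<xi> \<bullet> capE = 0 \<longrightarrow> (\<xi> - capc \<theta>) \<bullet> capE = cos (pi - \<theta>))"

text \<open>Region bounded by Sigma and the boundary hyperplane: closure of the bounded
  components of the open half space minus Sigma.\<close>
definition hat_region :: "'a::euclidean_space set \<Rightarrow> 'a set" where
  "hat_region \<Sigma> = closure (\<Union>{C\<in>components ({x. x \<bullet> capE < 0} - \<Sigma>). bounded C})"

text \<open>Region bounded by C_(r,theta)(x0) and the hyperplane.\<close>
definition cap_ball :: "real \<Rightarrow> real \<Rightarrow> 'a::euclidean_space \<Rightarrow> 'a set" where
  "cap_ball \<theta> r x0 = {x. x \<bullet> capE \<le> 0 \<and> norm (x - (x0 + (r * cos \<theta>) *\<^sub>R capE)) \<le> r}"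

definition rho_minus :: "'a::euclidean_space set \<Rightarrow> real \<Rightarrow> real" where
  "rho_minus K \<theta> = Sup {r. r > 0 \<and> (\<exists>x0. x0 \<bullet> capE = 0 \<and> cap_ball \<theta> r x0 \<subseteq> K)}"

end

theory Submission
  imports Defs
begin

text \<open>At a minimum point \<xi>0 of h, first and second order conditions along great circles of the
  cap, together with the Neumann condition on the boundary, give \<nabla>h(\<xi>0) = 0 and
  \<nabla>^2 h + h \<sigma> \<ge> h(\<xi>0) \<sigma> at \<xi>0.  So every principal radius there is at least h(\<xi>0), whence
  \<sigma>_{n-k} h(\<xi>0)^k \<le> 2^n \<sigma>_n = 2^n \<sigma>_{n-k} / f(\<xi>0), which bounds min h.

  For the inner radius: the maximum of \<langle>\<xi> - cos \<theta> e, x\<rangle> over \<Sigma> is attained where the normal is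
  \<xi> - cos \<theta> e (positivity of the second fundamental form and the capillary boundary condition
  rule out the antipodal alternatives), so it equals h(\<xi>) and the convex body lies in the half
  space \<langle>\<xi> - cos \<theta> e, y\<rangle> \<le> h(\<xi>).  Testing a capillary ball C_{r,\<theta>}(x0) inside the body at
  its points with normals \<xi>0 - cos \<theta> e and the reflection of it, evenness of h gives
  r (1 - cos \<theta>) \<le> h(\<xi>0).\<close>

abbreviation dir_deriv :: "('a::real_normed_vector \<Rightarrow> real) \<Rightarrow> 'a \<Rightarrow> 'a \<Rightarrow> real" where
  "dir_deriv g x \<equiv> frechet_derivative g (at x)"

section \<open>The spherical cap\<close>

lemma norm_capE [simp]: "norm (capE::'a::euclidean_space) = 1"
proof -
  have "(SOME b. b \<in> (Basis::'a set)) \<in> Basis"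
    using nonempty_Basis by (simp add: some_in_eq)
  then show ?thesis unfolding capE_def by simp
qed

lemma inner_capE_capE [simp]: "(capE::'a::euclidean_space) \<bullet> capE = 1"
  using norm_capE norm_eq_1 by blast

lemma inner_capc_capE [simp]: "capc \<theta> \<bullet> (capE::'a::euclidean_space) = cos \<theta>"
  unfolding capc_def by simp

lemma cap_memD:
  assumes "\<xi> \<in> cap \<theta>"
  shows "norm (\<xi> - capc \<theta>) = 1" "(\<xi> - capc \<theta>) \<bullet> (\<xi> - capc \<theta>) = 1" "\<xi> \<bullet> capE \<le> 0"
    "(\<xi> - capc \<theta>) \<bullet> capE = \<xi> \<bullet> capE - cos \<theta>"
  using assms unfolding cap_def by (auto simp: norm_eq_1 inner_diff_left)

lemma compact_cap: "compact (cap \<theta> :: 'a::euclidean_space set)"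
proof -
  have "cap \<theta> = {x. x \<bullet> capE \<le> 0} \<inter> sphere (capc \<theta>) (1::real)"
    unfolding cap_def by (auto simp: dist_norm norm_minus_commute)
  moreover have "closed {x::'a. x \<bullet> capE \<le> 0}"
    using closed_halfspace_le[of capE 0] by (simp add: inner_commute)
  ultimately show ?thesis using closed_Int_compact compact_sphere by metis
qed

lemma cap_nonempty: "cap \<theta> \<noteq> ({} :: 'a::euclidean_space set)"
proof -
  have "(cos \<theta> - 1) *\<^sub>R capE \<in> (cap \<theta> :: 'a set)"
    unfolding cap_def capc_def by (simp add: algebra_simps cos_le_one)
  then show ?thesis by blast
qed

lemma subspace_tang: "subspace (tang \<theta> \<xi>)"
  unfolding tang_def subspace_def by (auto simp: inner_add_left)

lemma tang_neg: "u \<in> tang \<theta> \<xi> \<Longrightarrow> - u \<in> tang \<theta> \<xi>"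
  unfolding tang_def by simp

lemma tang_scaleR: "u \<in> tang \<theta> \<xi> \<Longrightarrow> c *\<^sub>R u \<in> tang \<theta> \<xi>"
  unfolding tang_def by simp

lemma tang_diff: "u \<in> tang \<theta> \<xi> \<Longrightarrow> v \<in> tang \<theta> \<xi> \<Longrightarrow> u - v \<in> tang \<theta> \<xi>"
  unfolding tang_def by (simp add: inner_diff_left)

lemma dim_tang:
  assumes "\<xi> \<in> cap \<theta>"
  shows "dim (tang \<theta> (\<xi>::'a::euclidean_space)) = DIM('a) - 1"
proof -
  have N0: "\<xi> - capc \<theta> \<noteq> 0" using cap_memD(1)[OF assms] by auto
  have "tang \<theta> \<xi> = {x. (\<xi> - capc \<theta>) \<bullet> x = 0}"
    unfolding tang_def by (simp add: inner_commute)
  then show ?thesis using dim_hyperplane[OF N0] by simp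
qed

lemma capillary_angle_bounds:
  assumes "0 < \<theta>" "\<theta> \<le> pi / 2"
  shows "0 < sin \<theta>" "0 \<le> cos \<theta>" "cos \<theta> < 1"
proof -
  show s: "0 < sin \<theta>" using assms by (intro sin_gt_zero) auto
  show c: "0 \<le> cos \<theta>" using assms by (intro cos_ge_zero) auto
  have "(sin \<theta>)\<^sup>2 > 0" using s by simp
  then have "(cos \<theta>)\<^sup>2 < 1" using sin_cos_squared_add[of \<theta>] by linarith
  then show "cos \<theta> < 1" using c by (simp add: abs_square_less_1)
qed

lemma boundary_conormal_direction:
  fixes \<eta> :: "'a::euclidean_space"
  assumes "\<eta> \<in> cap \<theta>" "\<eta> \<bullet> capE = 0"
  defines "w \<equiv> capE + cos \<theta> *\<^sub>R (\<eta> - capc \<theta>)"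
  shows "w \<in> tang \<theta> \<eta>" "w \<bullet> capE = (sin \<theta>)\<^sup>2" "conormal \<theta> \<eta> = w /\<^sub>R norm w"
proof -
  define N where "N = \<eta> - capc \<theta>"
  have NN: "N \<bullet> N = 1" and Ne: "N \<bullet> capE = - cos \<theta>"
    using cap_memD(2,4)[OF assms(1)] assms(2) unfolding N_def by simp_all
  have "w \<bullet> N = capE \<bullet> N + cos \<theta> * (N \<bullet> N)"
    unfolding w_def N_def[symmetric] by (simp add: inner_add_left)
  then have "w \<bullet> N = 0" using NN Ne by (simp add: inner_commute)
  then show "w \<in> tang \<theta> \<eta>" unfolding tang_def N_def by simp
  have "w \<bullet> capE = 1 - (cos \<theta>)\<^sup>2" unfolding w_def N_def[symmetric] using Ne
    by (simp add: inner_add_left power2_eq_square)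
  then show "w \<bullet> capE = (sin \<theta>)\<^sup>2" by (simp add: sin_squared_eq)
  show "conormal \<theta> \<eta> = w /\<^sub>R norm w"
    unfolding conormal_def Let_def w_def N_def[symmetric] using Ne by (simp add: inner_commute)
qed

lemma boundary_tang_decompose:
  fixes \<eta> :: "'a::euclidean_space"
  assumes "\<eta> \<in> cap \<theta>" "\<eta> \<bullet> capE = 0" "0 < \<theta>" "\<theta> \<le> pi / 2" and u: "u \<in> tang \<theta> \<eta>"
  defines "w \<equiv> capE + cos \<theta> *\<^sub>R (\<eta> - capc \<theta>)"
  obtains z a where "z \<in> tang \<theta> \<eta>" "z \<bullet> capE = 0" "u = z + a *\<^sub>R w"
proof -
  have w: "w \<in> tang \<theta> \<eta>" "w \<bullet> capE > 0"
    using boundary_conormal_direction[OF assms(1,2)] capillary_angle_bounds(1)[OF assms(3,4)]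
    unfolding w_def by simp_all
  define a where "a = (u \<bullet> capE) / (w \<bullet> capE)"
  have "u - a *\<^sub>R w \<in> tang \<theta> \<eta>" by (intro tang_diff u tang_scaleR w(1))
  moreover have "(u - a *\<^sub>R w) \<bullet> capE = 0" unfolding a_def using w(2) by (simp add: inner_diff_left)
  ultimately show ?thesis using that[of "u - a *\<^sub>R w" a] by simp
qed

lemma refl_e_cap:
  fixes \<xi> x0 :: "'a::euclidean_space"
  assumes xi: "\<xi> \<in> cap \<theta>" and x0: "x0 \<bullet> capE = 0"
  shows "refl_e \<xi> \<in> cap \<theta>" "(refl_e \<xi> - capc \<theta>) \<bullet> capE = (\<xi> - capc \<theta>) \<bullet> capE"
    "(refl_e \<xi> - capc \<theta>) \<bullet> x0 = - ((\<xi> - capc \<theta>) \<bullet> x0)"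
proof -
  have re: "refl_e \<xi> \<bullet> capE = \<xi> \<bullet> capE" unfolding refl_e_def by (simp add: inner_diff_left)
  have "(refl_e \<xi> - capc \<theta>) \<bullet> (refl_e \<xi> - capc \<theta>) = (\<xi> - capc \<theta>) \<bullet> (\<xi> - capc \<theta>)"
    unfolding refl_e_def capc_def
    by (simp add: inner_diff_left inner_diff_right inner_commute algebra_simps)
  then have "norm (refl_e \<xi> - capc \<theta>) = norm (\<xi> - capc \<theta>)" by (simp add: norm_eq_sqrt_inner)
  then show "refl_e \<xi> \<in> cap \<theta>" using xi re unfolding cap_def by simp
  show "(refl_e \<xi> - capc \<theta>) \<bullet> capE = (\<xi> - capc \<theta>) \<bullet> capE" using re by (simp add: inner_diff_left)
  show "(refl_e \<xi> - capc \<theta>) \<bullet> x0 = - ((\<xi> - capc \<theta>) \<bullet> x0)"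
    unfolding refl_e_def capc_def using x0 by (simp add: inner_diff_left inner_commute[of capE x0])
qed

section \<open>Great circles leaving a point of the cap\<close>

definition great_circle :: "real \<Rightarrow> 'a::euclidean_space \<Rightarrow> 'a \<Rightarrow> real \<Rightarrow> 'a" where
  "great_circle \<theta> \<xi> u t = capc \<theta> + cos t *\<^sub>R (\<xi> - capc \<theta>) + sin t *\<^sub>R u"

text \<open>When cos \<theta> = 0 the cap is a closed half sphere, so a great circle starting on its
  boundary in a direction tangent to the boundary stays in the cap.\<close>
definition enters_cap :: "real \<Rightarrow> 'a::euclidean_space \<Rightarrow> 'a \<Rightarrow> bool" where
  "enters_cap \<theta> \<xi> u \<longleftrightarrow> \<xi> \<bullet> capE < 0 \<or> u \<bullet> capE < 0 \<or> (cos \<theta> = 0 \<and> u \<bullet> capE \<le> 0)"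

lemma great_circle_0 [simp]: "great_circle \<theta> \<xi> u 0 = \<xi>"
  unfolding great_circle_def by simp

lemma great_circle_has_vector_derivative:
  "(great_circle \<theta> \<xi> u has_vector_derivative (- sin t *\<^sub>R (\<xi> - capc \<theta>) + cos t *\<^sub>R u)) (at t)"
  unfolding great_circle_def
  by (auto intro!: derivative_eq_intros simp: has_vector_derivative_def algebra_simps)

lemma isCont_great_circle: "isCont (great_circle \<theta> \<xi> u) t"
  using great_circle_has_vector_derivative has_vector_derivative_continuous by blast

lemma norm_great_circle:
  assumes "\<xi> \<in> cap \<theta>" "u \<in> tang \<theta> \<xi>" "norm u = 1"
  shows "norm (great_circle \<theta> \<xi> u t - capc \<theta>) = 1"
proof -
  define N where "N = \<xi> - capc \<theta>"
  have "N \<bullet> N = 1" "u \<bullet> N = 0" "u \<bullet> u = 1"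
    using cap_memD(2)[OF assms(1)] assms(2,3) unfolding tang_def N_def by (simp_all add: norm_eq_1)
  moreover have "(great_circle \<theta> \<xi> u t - capc \<theta>) \<bullet> (great_circle \<theta> \<xi> u t - capc \<theta>)
      = (cos t)\<^sup>2 * (N \<bullet> N) + 2 * cos t * sin t * (u \<bullet> N) + (sin t)\<^sup>2 * (u \<bullet> u)"
    unfolding great_circle_def N_def[symmetric]
    by (simp add: inner_add_left inner_add_right inner_commute power2_eq_square algebra_simps)
  ultimately show ?thesis by (simp add: norm_eq_1)
qed

lemma enters_cap_scaleR:
  "0 < c \<Longrightarrow> enters_cap \<theta> \<xi> (c *\<^sub>R u) \<longleftrightarrow> enters_cap \<theta> \<xi> u"
  unfolding enters_cap_def by (simp add: mult_less_0_iff mult_le_0_iff)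

lemma continuous_at_imp_near:
  fixes f :: "real \<Rightarrow> 'b::topological_space"
  assumes "isCont f a" "open S" "f a \<in> S"
  shows "\<exists>d>0. \<forall>t. \<bar>t - a\<bar> < d \<longrightarrow> f t \<in> S"
proof -
  have "eventually (\<lambda>t. f t \<in> S) (at a)"
    using assms by (simp add: continuous_at topological_tendstoD)
  then obtain d where "d > 0" "\<forall>t. t \<noteq> a \<and> dist t a < d \<longrightarrow> f t \<in> S"
    unfolding eventually_at by blast
  then show ?thesis using assms(3) by (metis dist_real_def)
qed

lemma great_circle_in_cap:
  assumes xi: "\<xi> \<in> cap \<theta>" and u: "u \<in> tang \<theta> \<xi>" "norm u = 1" and ent: "enters_cap \<theta> \<xi> u"
  shows "\<exists>\<delta>>0. \<forall>t. 0 \<le> t \<and> t < \<delta> \<longrightarrow> great_circle \<theta> \<xi> u t \<in> cap \<theta>"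
proof -
  define f where "f = (\<lambda>t. great_circle \<theta> \<xi> u t \<bullet> capE)"
  have f: "f t = cos \<theta> + cos t * (\<xi> \<bullet> capE - cos \<theta>) + sin t * (u \<bullet> capE)" for t
    unfolding f_def great_circle_def using cap_memD(4)[OF xi] by (simp add: inner_add_left)
  have "\<exists>\<delta>>0. \<forall>t. 0 \<le> t \<and> t < \<delta> \<longrightarrow> f t \<le> 0"
  proof -
    consider "\<xi> \<bullet> capE < 0" | "u \<bullet> capE < 0" | "cos \<theta> = 0" "u \<bullet> capE \<le> 0"
      using ent unfolding enters_cap_def by blast
    then show ?thesis
    proof cases
      case 1
      have "isCont f 0" unfolding f_def by (intro continuous_intros isCont_great_circle)
      then obtain d where d: "d > 0" "\<forall>t. \<bar>t\<bar> < d \<longrightarrow> f t < 0"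
        using continuous_at_imp_near[where f=f and a=0 and S="{..<0}"] 1 unfolding f_def by auto
      have "f t \<le> 0" if "0 \<le> t" "t < d" for t
        using d(2)[rule_format, of t] that by simp
      then show ?thesis using d(1) by blast
    next
      case 2
      have "(f has_real_derivative u \<bullet> capE) (at 0)"
        using great_circle_has_vector_derivative[of \<theta> \<xi> u 0] unfolding f_def
        by (auto intro!: derivative_eq_intros simp: has_vector_derivative_def has_field_derivative_def)
      then obtain d where d: "d > 0" "\<forall>h>0. h < d \<longrightarrow> f (0 + h) < f 0"
        using DERIV_neg_dec_right 2 by blast
      have f0: "f 0 \<le> 0" using cap_memD(3)[OF xi] unfolding f_def by simp
      have "f t \<le> 0" if "0 \<le> t" "t < d" for t
        using d(2)[rule_format, of t] that f0 by (cases "t = 0") auto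
      then show ?thesis using d(1) by blast
    next
      case 3
      have "f t \<le> 0" if "0 \<le> t" "t < pi / 2" for t
      proof -
        have "cos t \<ge> 0" "sin t \<ge> 0" using that by (auto intro!: cos_ge_zero sin_ge_zero)
        then show ?thesis unfolding f 3(1) using cap_memD(3)[OF xi] 3(2)
          by (simp add: mult_nonneg_nonpos add_nonpos_nonpos)
      qed
      then show ?thesis by (intro exI[of _ "pi / 2"]) auto
    qed
  qed
  moreover have "great_circle \<theta> \<xi> u t \<in> cap \<theta>" if "f t \<le> 0" for t
    using that norm_great_circle[OF xi u] unfolding cap_def f_def by simp
  ultimately show ?thesis by blast
qed

lemma has_real_derivative_compose_path:
  fixes F :: "'a::real_normed_vector \<Rightarrow> real"
  assumes F: "(F has_derivative DF) (at (\<gamma> t))" and \<gamma>: "(\<gamma> has_vector_derivative V) (at t)"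
  shows "((\<lambda>s. F (\<gamma> s)) has_real_derivative DF V) (at t)"
proof -
  have "((\<lambda>s. F (\<gamma> s)) has_derivative (\<lambda>h. DF (h *\<^sub>R V))) (at t)"
    using has_derivative_compose[OF \<gamma>[unfolded has_vector_derivative_def] F] by simp
  moreover have "(\<lambda>h. DF (h *\<^sub>R V)) = (*) (DF V)"
    using linear_scale[OF has_derivative_linear[OF F]] by (auto simp: mult.commute)
  ultimately show ?thesis by (simp add: has_field_derivative_def)
qed

lemma great_circle_compose_has_real_derivative:
  assumes "(F has_derivative DF) (at (great_circle \<theta> \<xi> u t))"
  shows "((\<lambda>t. F (great_circle \<theta> \<xi> u t)) has_real_derivative
           DF (- sin t *\<^sub>R (\<xi> - capc \<theta>) + cos t *\<^sub>R u)) (at t)"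
  by (rule has_real_derivative_compose_path[OF assms great_circle_has_vector_derivative])

lemma great_circle_compose_has_real_derivative_0:
  assumes "(F has_derivative DF) (at \<xi>)"
  shows "((\<lambda>t. F (great_circle \<theta> \<xi> u t)) has_real_derivative DF u) (at 0)"
  using great_circle_compose_has_real_derivative[of F DF \<theta> \<xi> u 0] assms by simp

lemma deriv_nonneg_at_right_min:
  fixes \<phi> :: "real \<Rightarrow> real"
  assumes "(\<phi> has_real_derivative D) (at 0)" "\<delta> > 0" "\<forall>t. 0 \<le> t \<and> t < \<delta> \<longrightarrow> \<phi> 0 \<le> \<phi> t"
  shows "D \<ge> 0"
proof (rule ccontr)
  assume "\<not> D \<ge> 0"
  then obtain d where d: "d > 0" "\<forall>h>0. h < d \<longrightarrow> \<phi> (0 + h) < \<phi> 0"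
    using DERIV_neg_dec_right[OF assms(1)] by force
  define t where "t = min d \<delta> / 2"
  have "t > 0" "t < d" "t < \<delta>" using d assms(2) unfolding t_def by auto
  then show False using d(2)[rule_format, of t] assms(3)[rule_format, of t] by simp
qed

lemma deriv2_nonneg_at_right_min:
  fixes \<phi> \<psi> :: "real \<Rightarrow> real"
  assumes \<epsilon>: "\<epsilon> > 0" and \<phi>: "\<And>t. \<bar>t\<bar> < \<epsilon> \<Longrightarrow> (\<phi> has_real_derivative \<psi> t) (at t)"
    and \<psi>: "\<psi> 0 = 0" "(\<psi> has_real_derivative L) (at 0)"
    and min: "\<delta> > 0" "\<forall>t. 0 \<le> t \<and> t < \<delta> \<longrightarrow> \<phi> 0 \<le> \<phi> t"
  shows "L \<ge> 0"
proof (rule ccontr)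
  assume "\<not> L \<ge> 0"
  then obtain d where d: "d > 0" "\<forall>h>0. h < d \<longrightarrow> \<psi> (0 + h) < \<psi> 0"
    using DERIV_neg_dec_right[OF \<psi>(2)] by (meson not_le)
  define t where "t = min (min d \<delta>) \<epsilon> / 2"
  have t: "0 < t" "t < d" "t < \<delta>" "t < \<epsilon>" using d min \<epsilon> unfolding t_def by auto
  obtain z where z: "0 < z" "z < t" "\<phi> t - \<phi> 0 = (t - 0) * \<psi> z"
    using MVT2[of 0 t \<phi> \<psi>] \<phi> t by force
  have "\<psi> z < 0" using d(2)[rule_format, of z] z t \<psi>(1) by simp
  then have "\<phi> t < \<phi> 0" using mult_pos_neg[OF t(1) \<open>\<psi> z < 0\<close>] z(3) by simp
  moreover have "\<phi> 0 \<le> \<phi> t" using min(2) t by simp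
  ultimately show False by simp
qed

section \<open>Symmetry of second derivatives\<close>

lemma has_derivative_increment_estimate:
  fixes G :: "'a::real_normed_vector \<Rightarrow> real"
  assumes G: "(G has_derivative L) (at \<xi>)" and e: "e > 0"
  shows "\<exists>d>0. \<forall>w1 w2. norm w1 < d \<longrightarrow> norm w2 < d \<longrightarrow>
           \<bar>G (\<xi> + w1) - G (\<xi> + w2) - L (w1 - w2)\<bar> \<le> e * (norm w1 + norm w2)"
proof -
  obtain d where d: "d > 0"
    "\<forall>y. norm (y - \<xi>) < d \<longrightarrow> norm (G y - G \<xi> - L (y - \<xi>)) \<le> e * norm (y - \<xi>)"
    using G e unfolding has_derivative_at_alt by blast
  have "\<bar>G (\<xi> + w1) - G (\<xi> + w2) - L (w1 - w2)\<bar> \<le> e * (norm w1 + norm w2)"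
    if "norm w1 < d" "norm w2 < d" for w1 w2
  proof -
    have "L (w1 - w2) = L w1 - L w2" using linear_diff[OF has_derivative_linear[OF G]] .
    then have "G (\<xi> + w1) - G (\<xi> + w2) - L (w1 - w2)
        = (G (\<xi> + w1) - G \<xi> - L w1) - (G (\<xi> + w2) - G \<xi> - L w2)" by simp
    moreover have "\<bar>G (\<xi> + w1) - G \<xi> - L w1\<bar> \<le> e * norm w1" "\<bar>G (\<xi> + w2) - G \<xi> - L w2\<bar> \<le> e * norm w2"
      using d(2)[rule_format, of "\<xi> + w1"] d(2)[rule_format, of "\<xi> + w2"] that by simp_all
    ultimately show ?thesis by (simp add: algebra_simps)
  qed
  then show ?thesis using d(1) by blast
qed

lemma second_difference_mean_value:
  fixes g :: "'a::real_normed_vector \<Rightarrow> real"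
  assumes s: "s > 0"
    and dg: "\<And>t. 0 \<le> t \<Longrightarrow> t \<le> s \<Longrightarrow>
               g differentiable (at (\<xi> + s *\<^sub>R v + t *\<^sub>R u)) \<and> g differentiable (at (\<xi> + t *\<^sub>R u))"
  shows "\<exists>\<tau>. 0 < \<tau> \<and> \<tau> < s \<and>
           g (\<xi> + s *\<^sub>R u + s *\<^sub>R v) - g (\<xi> + s *\<^sub>R u) - g (\<xi> + s *\<^sub>R v) + g \<xi>
             = s * (dir_deriv g (\<xi> + s *\<^sub>R v + \<tau> *\<^sub>R u) u - dir_deriv g (\<xi> + \<tau> *\<^sub>R u) u)"
proof -
  have line: "((\<lambda>t. g (a + t *\<^sub>R u)) has_real_derivative dir_deriv g (a + t *\<^sub>R u) u) (at t)"
    if "g differentiable (at (a + t *\<^sub>R u))" for a t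
  proof (rule has_real_derivative_compose_path[where F = g and DF = "dir_deriv g (a + t *\<^sub>R u)"
        and \<gamma> = "\<lambda>t. a + t *\<^sub>R u" and t = t and V = u])
    show "(g has_derivative dir_deriv g (a + t *\<^sub>R u)) (at (a + t *\<^sub>R u))"
      using that frechet_derivative_works by blast
    show "((\<lambda>t. a + t *\<^sub>R u) has_vector_derivative u) (at t)"
      by (auto intro!: derivative_eq_intros simp: has_vector_derivative_def)
  qed
  define \<psi> where "\<psi> = (\<lambda>t. g (\<xi> + s *\<^sub>R v + t *\<^sub>R u) - g (\<xi> + t *\<^sub>R u))"
  define \<psi>' where "\<psi>' = (\<lambda>t. dir_deriv g (\<xi> + s *\<^sub>R v + t *\<^sub>R u) u - dir_deriv g (\<xi> + t *\<^sub>R u) u)"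
  have "(\<psi> has_real_derivative \<psi>' t) (at t)" if "0 \<le> t" "t \<le> s" for t
    unfolding \<psi>_def \<psi>'_def using dg[OF that] by (intro DERIV_diff line) auto
  then obtain \<tau> where "0 < \<tau>" "\<tau> < s" "\<psi> s - \<psi> 0 = (s - 0) * \<psi>' \<tau>"
    using MVT2[of 0 s \<psi> \<psi>'] s by auto
  moreover have "\<psi> s - \<psi> 0 = g (\<xi> + s *\<^sub>R u + s *\<^sub>R v) - g (\<xi> + s *\<^sub>R u) - g (\<xi> + s *\<^sub>R v) + g \<xi>"
    unfolding \<psi>_def by (simp add: algebra_simps)
  ultimately show ?thesis unfolding \<psi>'_def by auto
qed

lemma second_difference_estimate:
  fixes g :: "'a::real_normed_vector \<Rightarrow> real"
  assumes s: "s > 0"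
    and dg: "\<And>t. 0 \<le> t \<Longrightarrow> t \<le> s \<Longrightarrow>
               g differentiable (at (\<xi> + s *\<^sub>R v + t *\<^sub>R u)) \<and> g differentiable (at (\<xi> + t *\<^sub>R u))"
    and L: "linear L" and e: "e \<ge> 0"
    and approx: "\<And>w1 w2. norm w1 \<le> s * (norm u + norm v) \<Longrightarrow> norm w2 \<le> s * (norm u + norm v) \<Longrightarrow>
       \<bar>dir_deriv g (\<xi> + w1) u - dir_deriv g (\<xi> + w2) u - L (w1 - w2)\<bar> \<le> e * (norm w1 + norm w2)"
  shows "\<bar>g (\<xi> + s *\<^sub>R u + s *\<^sub>R v) - g (\<xi> + s *\<^sub>R u) - g (\<xi> + s *\<^sub>R v) + g \<xi> - s\<^sup>2 * L v\<bar>
      \<le> e * s\<^sup>2 * (2 * norm u + norm v)"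
proof -
  obtain \<tau> where \<tau>: "0 < \<tau>" "\<tau> < s"
      "g (\<xi> + s *\<^sub>R u + s *\<^sub>R v) - g (\<xi> + s *\<^sub>R u) - g (\<xi> + s *\<^sub>R v) + g \<xi>
         = s * (dir_deriv g (\<xi> + s *\<^sub>R v + \<tau> *\<^sub>R u) u - dir_deriv g (\<xi> + \<tau> *\<^sub>R u) u)"
    using second_difference_mean_value[OF s dg] by blast
  define E where "E = dir_deriv g (\<xi> + s *\<^sub>R v + \<tau> *\<^sub>R u) u - dir_deriv g (\<xi> + \<tau> *\<^sub>R u) u - s * L v"
  have nu: "norm (\<tau> *\<^sub>R u) \<le> s * norm u" using \<tau> by (simp add: mult_right_mono)
  then have nvu: "norm (s *\<^sub>R v + \<tau> *\<^sub>R u) \<le> s * norm v + s * norm u"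
    using norm_triangle_ineq[of "s *\<^sub>R v" "\<tau> *\<^sub>R u"] s by simp
  have "s * norm u \<le> s * (norm u + norm v)" using s by simp
  moreover have "L (s *\<^sub>R v) = s * L v" using linear_scale[OF L] by simp
  ultimately have "\<bar>E\<bar> \<le> e * (norm (s *\<^sub>R v + \<tau> *\<^sub>R u) + norm (\<tau> *\<^sub>R u))"
    using approx[of "s *\<^sub>R v + \<tau> *\<^sub>R u" "\<tau> *\<^sub>R u"] nu nvu unfolding E_def
    by (simp add: add.assoc algebra_simps)
  also have "\<dots> \<le> e * (s * (2 * norm u + norm v))"
    using nu nvu e by (intro mult_left_mono) (auto simp: algebra_simps)
  finally have "s * \<bar>E\<bar> \<le> s * (e * (s * (2 * norm u + norm v)))" using s by simp
  moreover have "g (\<xi> + s *\<^sub>R u + s *\<^sub>R v) - g (\<xi> + s *\<^sub>R u) - g (\<xi> + s *\<^sub>R v) + g \<xi> - s\<^sup>2 * L v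
      = s * E" unfolding \<tau>(3) E_def by (simp add: power2_eq_square algebra_simps)
  ultimately show ?thesis using s by (simp add: abs_mult power2_eq_square mult_ac)
qed

lemma second_difference_approx:
  fixes g :: "'a::real_normed_vector \<Rightarrow> real"
  assumes U: "open U" "\<xi> \<in> U" and dg: "\<forall>x\<in>U. g differentiable (at x)"
    and du: "(\<lambda>x. dir_deriv g x u) differentiable (at \<xi>)" and e: "e > 0"
  shows "\<exists>s0>0. \<forall>s. 0 < s \<and> s < s0 \<longrightarrow>
     \<bar>g (\<xi> + s *\<^sub>R u + s *\<^sub>R v) - g (\<xi> + s *\<^sub>R u) - g (\<xi> + s *\<^sub>R v) + g \<xi>
        - s\<^sup>2 * dir_deriv (\<lambda>x. dir_deriv g x u) \<xi> v\<bar>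
      \<le> e * s\<^sup>2 * (2 * norm u + norm v)"
proof -
  define L where "L = dir_deriv (\<lambda>x. dir_deriv g x u) \<xi>"
  have GL: "((\<lambda>x. dir_deriv g x u) has_derivative L) (at \<xi>)"
    using du frechet_derivative_works unfolding L_def by blast
  obtain d where d: "d > 0" "\<forall>w1 w2. norm w1 < d \<longrightarrow> norm w2 < d \<longrightarrow>
      \<bar>dir_deriv g (\<xi> + w1) u - dir_deriv g (\<xi> + w2) u - L (w1 - w2)\<bar> \<le> e * (norm w1 + norm w2)"
    using has_derivative_increment_estimate[OF GL e] by blast
  obtain r where r: "r > 0" "ball \<xi> r \<subseteq> U" using U open_contains_ball by blast
  define K where "K = norm u + norm v + 1"
  have K: "K > 0" unfolding K_def by (simp add: add_nonneg_pos)
  define s0 where "s0 = min d r / K"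
  have "s0 > 0" using d r K unfolding s0_def by simp
  moreover have "\<bar>g (\<xi> + s *\<^sub>R u + s *\<^sub>R v) - g (\<xi> + s *\<^sub>R u) - g (\<xi> + s *\<^sub>R v) + g \<xi> - s\<^sup>2 * L v\<bar>
      \<le> e * s\<^sup>2 * (2 * norm u + norm v)" if s: "0 < s" "s < s0" for s
  proof (rule second_difference_estimate[OF s(1) _ has_derivative_linear[OF GL]])
    have "s * (norm u + norm v) \<le> s * K" using s unfolding K_def by simp
    also have "s * K < min d r" using s K unfolding s0_def by (simp add: pos_less_divide_eq mult.commute)
    finally have small: "s * (norm u + norm v) < min d r" .
    show "\<bar>dir_deriv g (\<xi> + w1) u - dir_deriv g (\<xi> + w2) u - L (w1 - w2)\<bar> \<le> e * (norm w1 + norm w2)"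
      if "norm w1 \<le> s * (norm u + norm v)" "norm w2 \<le> s * (norm u + norm v)" for w1 w2
      using d(2) that small by auto
    have inU: "\<xi> + w \<in> U" if "norm w < r" for w using that r by (auto simp: dist_norm)
    show "g differentiable (at (\<xi> + s *\<^sub>R v + t *\<^sub>R u)) \<and> g differentiable (at (\<xi> + t *\<^sub>R u))"
      if "0 \<le> t" "t \<le> s" for t
    proof -
      have "norm (t *\<^sub>R u) \<le> s * norm u" "s * norm u \<le> s * (norm u + norm v)"
        using that s by (simp_all add: mult_right_mono)
      moreover have "norm (s *\<^sub>R v + t *\<^sub>R u) \<le> s * norm v + norm (t *\<^sub>R u)"
        using norm_triangle_ineq[of "s *\<^sub>R v" "t *\<^sub>R u"] s by simp
      ultimately have "norm (t *\<^sub>R u) < r" "norm (s *\<^sub>R v + t *\<^sub>R u) < r"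
        using small by (auto simp: distrib_left)
      then show ?thesis using dg inU by (simp add: add.assoc)
    qed
  qed (use e in simp)
  ultimately show ?thesis unfolding L_def by blast
qed

lemma dir_deriv_second_symmetric:
  fixes g :: "'a::real_normed_vector \<Rightarrow> real"
  assumes U: "open U" "\<xi> \<in> U" and dg: "\<forall>x\<in>U. g differentiable (at x)"
    and du: "(\<lambda>x. dir_deriv g x u) differentiable (at \<xi>)"
    and dv: "(\<lambda>x. dir_deriv g x v) differentiable (at \<xi>)"
  shows "dir_deriv (\<lambda>x. dir_deriv g x u) \<xi> v = dir_deriv (\<lambda>x. dir_deriv g x v) \<xi> u"
proof (rule ccontr)
  define a where "a = dir_deriv (\<lambda>x. dir_deriv g x u) \<xi> v"
  define b where "b = dir_deriv (\<lambda>x. dir_deriv g x v) \<xi> u"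
  define K where "K = 3 * (norm u + norm v) + 1"
  assume "\<not> ?thesis"
  then have D: "\<bar>a - b\<bar> > 0" unfolding a_def b_def by simp
  have K: "K > 0" unfolding K_def by (simp add: add_nonneg_pos)
  define e where "e = \<bar>a - b\<bar> / (2 * K)"
  have e: "e > 0" using D K unfolding e_def by simp
  define Q where "Q = (\<lambda>s. g (\<xi> + s *\<^sub>R u + s *\<^sub>R v) - g (\<xi> + s *\<^sub>R u) - g (\<xi> + s *\<^sub>R v) + g \<xi>)"
  obtain s0 where s0: "s0 > 0"
    "\<forall>s. 0 < s \<and> s < s0 \<longrightarrow> \<bar>Q s - s\<^sup>2 * a\<bar> \<le> e * s\<^sup>2 * (2 * norm u + norm v)"
    using second_difference_approx[OF U dg du e, of v] unfolding a_def Q_def by blast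
  have Q_swap: "g (\<xi> + s *\<^sub>R v + s *\<^sub>R u) - g (\<xi> + s *\<^sub>R v) - g (\<xi> + s *\<^sub>R u) + g \<xi> = Q s" for s
    unfolding Q_def by (simp add: algebra_simps)
  obtain s1 where s1: "s1 > 0"
    "\<forall>s. 0 < s \<and> s < s1 \<longrightarrow> \<bar>Q s - s\<^sup>2 * b\<bar> \<le> e * s\<^sup>2 * (2 * norm v + norm u)"
    using second_difference_approx[OF U dg dv e, of u] unfolding b_def Q_swap by blast
  define s where "s = min s0 s1 / 2"
  have s: "0 < s" "s < s0" "s < s1" using s0 s1 unfolding s_def by auto
  have "(Q s - s\<^sup>2 * b) - (Q s - s\<^sup>2 * a) = s\<^sup>2 * (a - b)" by (simp add: algebra_simps)
  then have "s\<^sup>2 * \<bar>a - b\<bar> = \<bar>(Q s - s\<^sup>2 * b) - (Q s - s\<^sup>2 * a)\<bar>" by (simp add: abs_mult)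
  also have "\<dots> \<le> e * s\<^sup>2 * (2 * norm u + norm v) + e * s\<^sup>2 * (2 * norm v + norm u)"
    using s0(2)[rule_format, of s] s1(2)[rule_format, of s] s by linarith
  also have "\<dots> = s\<^sup>2 * (e * (K - 1))" unfolding K_def by (simp add: algebra_simps)
  also have "\<dots> < s\<^sup>2 * \<bar>a - b\<bar>"
  proof -
    have "e * (K - 1) < e * (2 * K)" using e K by simp
    also have "e * (2 * K) = \<bar>a - b\<bar>" unfolding e_def using K by simp
    finally show ?thesis using s by simp
  qed
  finally show False by simp
qed

section \<open>Diagonalising a symmetric bilinear form on a subspace\<close>

definition diag_basis ::
  "nat \<Rightarrow> 'a::euclidean_space set \<Rightarrow> ('a \<Rightarrow> 'a \<Rightarrow> real) \<Rightarrow> (nat \<Rightarrow> 'a) \<Rightarrow> (nat \<Rightarrow> real) \<Rightarrow> bool"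
where
  "diag_basis n T A b lam \<longleftrightarrow> (\<forall>i<n. b i \<in> T) \<and>
      (\<forall>i<n. \<forall>j<n. b i \<bullet> b j = (if i = j then 1 else 0)) \<and>
      (\<forall>i<n. \<forall>j<n. A (b i) (b j) = (if i = j then lam i else 0))"

lemma bilinear_quadratic_max_on_subspace:
  fixes A :: "'a::euclidean_space \<Rightarrow> 'a \<Rightarrow> real"
  assumes bil: "bilinear A" and W: "subspace W" "W \<noteq> {0}"
  obtains c where "c \<in> W" "norm c = 1" "\<And>x. x \<in> W \<Longrightarrow> A x x \<le> A c c * (norm x)\<^sup>2"
proof -
  define S where "S = W \<inter> sphere 0 1"
  have "compact S" unfolding S_def using closed_subspace[OF W(1)] closed_Int_compact compact_sphere by blast
  obtain w where w: "w \<in> W" "w \<noteq> 0" using W subspace_0 by blast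
  then have "w /\<^sub>R norm w \<in> S" unfolding S_def using W(1) by (simp add: subspace_scale)
  then have "S \<noteq> {}" by blast
  moreover have "continuous_on S (\<lambda>x. A x x)"
    using bilinear_continuous_on_compose[OF continuous_on_id continuous_on_id bil] .
  ultimately obtain c where c: "c \<in> S" "\<forall>y\<in>S. A y y \<le> A c c"
    using continuous_attains_sup[OF \<open>compact S\<close>] by blast
  have "A x x \<le> A c c * (norm x)\<^sup>2" if "x \<in> W" for x
  proof (cases "x = 0")
    case True then show ?thesis using bilinear_lzero[OF bil] by simp
  next
    case False
    then have "x /\<^sub>R norm x \<in> S" unfolding S_def using that W(1) by (simp add: subspace_scale)
    then have "A (x /\<^sub>R norm x) (x /\<^sub>R norm x) \<le> A c c" using c by blast
    then have "A x x / (norm x)\<^sup>2 \<le> A c c"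
      by (simp add: bilinear_lmul[OF bil] bilinear_rmul[OF bil] power2_eq_square divide_inverse mult_ac)
    then show ?thesis using False by (simp add: field_simps)
  qed
  then show ?thesis using that c unfolding S_def by auto
qed

lemma symmetric_form_maximiser_orthogonal:
  fixes A :: "'a::euclidean_space \<Rightarrow> 'a \<Rightarrow> real"
  assumes bil: "bilinear A" and sym: "\<And>x y. A x y = A y x" and W: "subspace W"
    and c: "c \<in> W" "norm c = 1" and max: "\<And>x. x \<in> W \<Longrightarrow> A x x \<le> A c c * (norm x)\<^sup>2"
    and w: "w \<in> W" "c \<bullet> w = 0"
  shows "A c w = 0"
proof (rule ccontr)
  assume a: "A c w \<noteq> 0"
  define M where "M = A c c * (norm w)\<^sup>2 - A w w"
  define t where "t = A c w / (\<bar>M\<bar> + 1)"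
  have "c + t *\<^sub>R w \<in> W" using w c W by (simp add: subspace_add subspace_scale)
  then have m: "A (c + t *\<^sub>R w) (c + t *\<^sub>R w) \<le> A c c * (norm (c + t *\<^sub>R w))\<^sup>2" by (rule max)
  have "(norm (c + t *\<^sub>R w))\<^sup>2 = (c + t *\<^sub>R w) \<bullet> (c + t *\<^sub>R w)" by (rule power2_norm_eq_inner)
  also have "\<dots> = c \<bullet> c + 2 * t * (c \<bullet> w) + t\<^sup>2 * (w \<bullet> w)"
    by (simp add: inner_add_left inner_add_right inner_commute power2_eq_square algebra_simps)
  finally have n2: "(norm (c + t *\<^sub>R w))\<^sup>2 = 1 + t\<^sup>2 * (norm w)\<^sup>2"
    using c(2) w(2) by (simp add: norm_eq_1 power2_norm_eq_inner)
  have "A (c + t *\<^sub>R w) (c + t *\<^sub>R w) = A c c + 2 * t * A c w + t\<^sup>2 * A w w"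
    using sym[of w c]
    by (simp add: bilinear_ladd[OF bil] bilinear_radd[OF bil] bilinear_lmul[OF bil]
        bilinear_rmul[OF bil] power2_eq_square algebra_simps)
  then have ineq: "2 * t * A c w \<le> t\<^sup>2 * M" using m unfolding n2 M_def by (simp add: algebra_simps)
  have At: "A c w = t * (\<bar>M\<bar> + 1)" unfolding t_def by (simp add: add_nonneg_pos)
  then have "t\<^sup>2 * (2 * (\<bar>M\<bar> + 1)) \<le> t\<^sup>2 * M" using ineq by (simp add: power2_eq_square algebra_simps)
  moreover have "t\<^sup>2 > 0" using a At by auto
  ultimately have "2 * (\<bar>M\<bar> + 1) \<le> M" by simp
  then show False by (cases "M \<ge> 0") auto
qed

lemma dim_orthogonal_slice:
  fixes c :: "'a::euclidean_space"
  assumes W: "subspace W" and c: "c \<in> W" "c \<noteq> 0"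
  shows "dim W = Suc (dim {x\<in>W. c \<bullet> x = 0})"
proof -
  define W' where "W' = {x\<in>W. c \<bullet> x = 0}"
  have sW': "subspace W'" using W unfolding W'_def subspace_def by (auto simp: inner_add_right)
  have span_W: "span (insert c W') = W"
  proof
    show "span (insert c W') \<subseteq> W" by (rule span_minimal) (use c W in \<open>auto simp: W'_def\<close>)
    show "W \<subseteq> span (insert c W')"
    proof
      fix w assume w: "w \<in> W"
      define p where "p = ((c \<bullet> w) / (c \<bullet> c)) *\<^sub>R c"
      have "w - p \<in> W'" unfolding W'_def p_def using w c W
        by (auto simp: subspace_diff subspace_scale inner_diff_right)
      then have "(w - p) + p \<in> span (insert c W')"
        unfolding p_def by (intro span_add span_scale) (auto intro: span_base)
      then show "w \<in> span (insert c W')" by simp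
    qed
  qed
  have "c \<notin> W'" using c(2) unfolding W'_def by simp
  then have "c \<notin> span W'" using sW' by (metis span_eq_iff)
  then have "dim W = dim W' + 1" using dim_insert[of c W'] dim_span[of "insert c W'"] span_W by simp
  then show ?thesis unfolding W'_def by simp
qed

lemma diag_basis_Suc:
  assumes b: "diag_basis n {x\<in>W. c \<bullet> x = 0} A b lam" and c: "c \<in> W" "norm c = 1"
    and Ac: "\<And>w. w \<in> W \<Longrightarrow> c \<bullet> w = 0 \<Longrightarrow> A c w = 0" and sym: "\<And>x y. A x y = A y x"
  shows "diag_basis (Suc n) W A (case_nat c b) (case_nat (A c c) lam)"
proof -
  have "c \<bullet> c = 1" using c(2) by (simp add: norm_eq_1)
  moreover have "A (b i) c = 0" "b i \<bullet> c = 0" if "i < n" for i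
    using b Ac[of "b i"] sym[of c "b i"] that unfolding diag_basis_def by (auto simp: inner_commute)
  ultimately show ?thesis using b c(1) Ac unfolding diag_basis_def All_less_Suc2 by auto
qed

lemma symmetric_form_diag_basis:
  fixes A :: "'a::euclidean_space \<Rightarrow> 'a \<Rightarrow> real"
  assumes bil: "bilinear A" and sym: "\<And>x y. A x y = A y x" and W: "subspace W" "dim W = n"
  shows "\<exists>b lam. diag_basis n W A b lam"
  using W
proof (induction n arbitrary: W)
  case 0
  then show ?case unfolding diag_basis_def by simp
next
  case (Suc n)
  have "W \<noteq> {0}" using Suc.prems(2) by auto
  then obtain c where c: "c \<in> W" "norm c = 1" "\<And>x. x \<in> W \<Longrightarrow> A x x \<le> A c c * (norm x)\<^sup>2"
    using bilinear_quadratic_max_on_subspace[OF bil Suc.prems(1)] by blast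
  have Ac: "A c w = 0" if "w \<in> W" "c \<bullet> w = 0" for w
    using symmetric_form_maximiser_orthogonal[OF bil sym Suc.prems(1) c that] .
  have "subspace {x\<in>W. c \<bullet> x = 0}"
    using Suc.prems(1) unfolding subspace_def by (auto simp: inner_add_right)
  moreover have "c \<noteq> 0" using c(2) by auto
  then have "dim {x\<in>W. c \<bullet> x = 0} = n"
    using dim_orthogonal_slice[OF Suc.prems(1) c(1)] Suc.prems(2) by simp
  ultimately obtain b lam where "diag_basis n {x\<in>W. c \<bullet> x = 0} A b lam"
    using Suc.IH by blast
  then show ?case using diag_basis_Suc[where A = A and c = c, OF _ c(1,2) Ac sym] by blast
qed

lemma diag_basis_inj:
  assumes "diag_basis n T A b lam" shows "inj_on b {..<n}"
proof (rule inj_onI)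
  fix i j assume ij: "i \<in> {..<n}" "j \<in> {..<n}" "b i = b j"
  then have "b i \<bullet> b j = 1" using assms unfolding diag_basis_def by simp
  then show "i = j" using assms ij unfolding diag_basis_def by (metis lessThan_iff zero_neq_one)
qed

lemma diag_basis_independent:
  assumes b: "diag_basis n T A b lam" and J: "J \<subseteq> {..<n}"
  shows "independent (b ` J)"
proof (rule pairwise_orthogonal_independent)
  have bb: "\<forall>i<n. \<forall>j<n. b i \<bullet> b j = (if i = j then 1 else 0)" using b unfolding diag_basis_def by blast
  show "pairwise orthogonal (b ` J)"
  proof (rule pairwiseI)
    fix x y assume "x \<in> b ` J" "y \<in> b ` J" "x \<noteq> y"
    then obtain i j where "i \<in> J" "j \<in> J" "x = b i" "y = b j" "i \<noteq> j" by blast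
    then show "orthogonal x y" using bb[rule_format, of i j] J unfolding orthogonal_def by auto
  qed
  show "0 \<notin> b ` J"
  proof
    assume "0 \<in> b ` J"
    then obtain i where "i \<in> J" "b i = 0" by auto
    then show False using bb[rule_format, of i i] J by auto
  qed
qed

lemma diag_basis_expansion:
  assumes b: "diag_basis n T A b lam" and T: "subspace T" "dim T = n" and w: "w \<in> T"
  shows "w = (\<Sum>i<n. (w \<bullet> b i) *\<^sub>R b i)"
proof -
  have bT: "\<forall>i<n. b i \<in> T" and bb: "\<forall>i<n. \<forall>j<n. b i \<bullet> b j = (if i = j then 1 else 0)"
    using b unfolding diag_basis_def by blast+
  have "card (b ` {..<n}) = n" using card_image[OF diag_basis_inj[OF b]] by simp
  then have "T \<subseteq> span (b ` {..<n})"
    using card_ge_dim_independent[OF _ diag_basis_independent[OF b order_refl]] bT T(2) by auto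
  then have w_span: "w \<in> span (b ` {..<n})" using w by blast
  define r where "r = w - (\<Sum>i<n. (w \<bullet> b i) *\<^sub>R b i)"
  have "r \<in> span (b ` {..<n})"
    unfolding r_def by (rule span_diff[OF w_span]) (intro span_sum span_scale span_base, auto)
  moreover have "orthogonal r (b j)" if "j < n" for j
  proof -
    have "(\<Sum>i<n. (w \<bullet> b i) *\<^sub>R b i) \<bullet> b j = (\<Sum>i<n. if i = j then w \<bullet> b i else 0)"
      unfolding inner_sum_left by (rule sum.cong) (use bb that in auto)
    then show ?thesis using that unfolding r_def orthogonal_def by (simp add: inner_diff_left)
  qed
  ultimately have "orthogonal r r" by (auto intro: orthogonal_to_span)
  then show ?thesis unfolding r_def orthogonal_self by simp
qed

lemma diag_basis_form_apply:
  assumes b: "diag_basis n T A b lam" and bil: "bilinear A" and T: "subspace T" "dim T = n"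
    and u: "u \<in> T" and j: "j < n"
  shows "A u (b j) = (u \<bullet> b j) * lam j"
proof -
  have bA: "\<forall>i<n. \<forall>j<n. A (b i) (b j) = (if i = j then lam i else 0)"
    using b unfolding diag_basis_def by blast
  have "A u (b j) = A (\<Sum>i<n. (u \<bullet> b i) *\<^sub>R b i) (b j)"
    using diag_basis_expansion[OF b T u] by simp
  also have "\<dots> = (\<Sum>i<n. A ((u \<bullet> b i) *\<^sub>R b i) (b j))"
    using linear_sum[of "\<lambda>x. A x (b j)"] bil unfolding bilinear_def by simp
  also have "\<dots> = (\<Sum>i<n. (u \<bullet> b i) * A (b i) (b j))"
    by (simp add: bilinear_lmul[OF bil])
  also have "\<dots> = (\<Sum>i<n. if i = j then (u \<bullet> b i) * lam i else 0)"
    by (rule sum.cong) (use bA j in auto)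
  finally show ?thesis using j by simp
qed

definition form_eigenspace :: "'a::euclidean_space set \<Rightarrow> ('a \<Rightarrow> 'a \<Rightarrow> real) \<Rightarrow> real \<Rightarrow> 'a set" where
  "form_eigenspace T A c = {u\<in>T. \<forall>w\<in>T. A u w = c * (u \<bullet> w)}"

lemma form_eigenspace_eq_span:
  assumes b: "diag_basis n T A b lam" and bil: "bilinear A" and sym: "\<And>x y. A x y = A y x"
    and T: "subspace T" "dim T = n"
  shows "form_eigenspace T A c = span (b ` {j. j < n \<and> lam j = c})"
proof
  have bT: "\<forall>i<n. b i \<in> T" using b unfolding diag_basis_def by blast
  show "form_eigenspace T A c \<subseteq> span (b ` {j. j < n \<and> lam j = c})"
  proof
    fix u assume "u \<in> form_eigenspace T A c"
    then have u: "u \<in> T" "\<forall>w\<in>T. A u w = c * (u \<bullet> w)" unfolding form_eigenspace_def by auto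
    have "(u \<bullet> b i) *\<^sub>R b i \<in> span (b ` {j. j < n \<and> lam j = c})" if "i < n" for i
    proof (cases "lam i = c")
      case True then show ?thesis using that by (auto intro: span_scale span_base)
    next
      case False
      have "(u \<bullet> b i) * lam i = c * (u \<bullet> b i)"
        using diag_basis_form_apply[OF b bil T u(1) that] u(2) bT that by auto
      then have "u \<bullet> b i = 0" using False by (simp add: algebra_simps)
      then show ?thesis by (simp add: span_zero)
    qed
    then have "(\<Sum>i<n. (u \<bullet> b i) *\<^sub>R b i) \<in> span (b ` {j. j < n \<and> lam j = c})"
      by (intro span_sum) auto
    then show "u \<in> span (b ` {j. j < n \<and> lam j = c})"
      using diag_basis_expansion[OF b T u(1)] by simp
  qed
  show "span (b ` {j. j < n \<and> lam j = c}) \<subseteq> form_eigenspace T A c"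
  proof (rule span_minimal)
    show "b ` {j. j < n \<and> lam j = c} \<subseteq> form_eigenspace T A c"
    proof (rule image_subsetI)
      fix j assume "j \<in> {j. j < n \<and> lam j = c}"
      then have j: "j < n" "lam j = c" by simp_all
      have "A (b j) w = c * (b j \<bullet> w)" if "w \<in> T" for w
        using sym[of "b j" w] diag_basis_form_apply[OF b bil T that j(1)] j
        by (simp add: inner_commute)
      then show "b j \<in> form_eigenspace T A c" unfolding form_eigenspace_def using bT j by simp
    qed
    show "subspace (form_eigenspace T A c)"
      using T(1) unfolding subspace_def form_eigenspace_def
      by (simp add: bilinear_ladd[OF bil] bilinear_lmul[OF bil] bilinear_lzero[OF bil]
          inner_add_left algebra_simps)
  qed
qed

lemma dim_form_eigenspace:
  assumes b: "diag_basis n T A b lam" and bil: "bilinear A" and sym: "\<And>x y. A x y = A y x"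
    and T: "subspace T" "dim T = n"
  shows "dim (form_eigenspace T A c) = card {j. j < n \<and> lam j = c}"
proof -
  have sub: "{j. j < n \<and> lam j = c} \<subseteq> {..<n}" by auto
  have "dim (form_eigenspace T A c) = card (b ` {j. j < n \<and> lam j = c})"
    unfolding form_eigenspace_eq_span[OF b bil sym T]
    by (rule dim_span_eq_card_independent[OF diag_basis_independent[OF b sub]])
  also have "\<dots> = card {j. j < n \<and> lam j = c}"
    by (rule card_image[OF inj_on_subset[OF diag_basis_inj[OF b] sub]])
  finally show ?thesis .
qed

section \<open>Elementary symmetric functions\<close>

definition elem_sym :: "nat \<Rightarrow> (nat \<Rightarrow> real) \<Rightarrow> nat \<Rightarrow> real" where
  "elem_sym m lam n = (\<Sum>S\<in>{S. S \<subseteq> {..<n} \<and> card S = m}. \<Prod>i\<in>S. lam i)"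

lemma elem_sym_eq_0: "n < m \<Longrightarrow> elem_sym m lam n = 0"
proof -
  assume "n < m"
  have "card S \<noteq> m" if "S \<subseteq> {..<n}" for S
    using card_mono[OF finite_lessThan that] \<open>n < m\<close> by simp
  then have "{S. S \<subseteq> {..<n} \<and> card S = m} = {}" by blast
  then show ?thesis unfolding elem_sym_def by (metis sum.empty)
qed

lemma prod_one_plus_expand: "(\<Prod>i<n. 1 + t * lam i) = (\<Sum>m\<le>n. elem_sym m lam n * t ^ m)"
proof -
  have "(\<Prod>i<n. 1 + t * lam i) = (\<Prod>i<n. t * lam i + 1)" by (simp add: add.commute)
  also have "\<dots> = (\<Sum>X\<in>Pow {..<n}. (\<Prod>i\<in>X. t * lam i) * (\<Prod>i\<in>{..<n}-X. 1))"
    by (rule prod_add) simp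
  also have "\<dots> = (\<Sum>X\<in>Pow {..<n}. t ^ card X * (\<Prod>i\<in>X. lam i))"
    by (simp add: prod.distrib)
  also have "\<dots> = (\<Sum>m\<le>n. \<Sum>X\<in>{X. X \<in> Pow {..<n} \<and> card X = m}. t ^ card X * (\<Prod>i\<in>X. lam i))"
  proof (rule sum.group[symmetric])
    show "card ` Pow {..<n} \<subseteq> {..n}" using card_mono[of "{..<n}"] by fastforce
  qed simp_all
  also have "\<dots> = (\<Sum>m\<le>n. elem_sym m lam n * t ^ m)"
  proof (rule sum.cong[OF refl])
    fix m
    have "(\<Sum>X\<in>{X. X \<in> Pow {..<n} \<and> card X = m}. t ^ card X * (\<Prod>i\<in>X. lam i))
        = (\<Sum>X\<in>{S. S \<subseteq> {..<n} \<and> card S = m}. t ^ m * (\<Prod>i\<in>X. lam i))"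
      by (rule sum.cong) auto
    also have "\<dots> = elem_sym m lam n * t ^ m"
      unfolding elem_sym_def by (simp add: sum_distrib_left mult.commute)
    finally show "(\<Sum>X\<in>{X. X \<in> Pow {..<n} \<and> card X = m}. t ^ card X * (\<Prod>i\<in>X. lam i))
        = elem_sym m lam n * t ^ m" .
  qed
  finally show ?thesis .
qed

lemma prod_lessThan_by_multiplicity:
  fixes F :: "'c \<Rightarrow> 'b::comm_monoid_mult" and n :: nat
  shows "(\<Prod>i<n. F (l i)) = (\<Prod>c\<in>l ` {..<n}. F c ^ card {j. j < n \<and> l j = c})"
proof -
  have "(\<Prod>i<n. F (l i)) = (\<Prod>c\<in>l ` {..<n}. \<Prod>x\<in>{x. x \<in> {..<n} \<and> l x = c}. F (l x))"
    by (rule prod.image_gen) simp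
  also have "\<dots> = (\<Prod>c\<in>l ` {..<n}. \<Prod>x\<in>{j. j < n \<and> l j = c}. F c)"
    by (intro prod.cong refl) auto
  also have "\<dots> = (\<Prod>c\<in>l ` {..<n}. F c ^ card {j. j < n \<and> l j = c})"
    by simp
  finally show ?thesis .
qed

lemma elem_sym_eq_if_same_multiplicities:
  assumes mult: "\<And>c. card {j. j < n \<and> l1 j = c} = card {j. j < n \<and> l2 j = c}"
  shows "elem_sym m l1 n = elem_sym m l2 n"
proof (cases "m \<le> n")
  case True
  have im: "c \<in> l ` {..<n} \<longleftrightarrow> card {j. j < n \<and> l j = c} > 0" for l :: "nat \<Rightarrow> real" and c
    by (auto simp: card_gt_0_iff)
  have "l1 ` {..<n} = l2 ` {..<n}"
    by (rule set_eqI) (simp only: im mult)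
  then have "(\<Prod>i<n. 1 + t * l1 i) = (\<Prod>i<n. 1 + t * l2 i)" for t
    by (simp only: prod_lessThan_by_multiplicity[of "\<lambda>x. 1 + t * x"] mult)
  then have "\<forall>t. (\<Sum>i\<le>n. elem_sym i l1 n * t ^ i) = (\<Sum>i\<le>n. elem_sym i l2 n * t ^ i)"
    by (simp add: prod_one_plus_expand)
  then show ?thesis using True unfolding polyfun_eq_coeffs by blast
next
  case False
  then show ?thesis by (simp add: elem_sym_eq_0)
qed

lemma elem_sym_lower_bound:
  fixes lam :: "nat \<Rightarrow> real"
  assumes lam: "\<forall>i<n. a \<le> lam i" and a: "a > 0" and k: "k \<le> n"
  shows "elem_sym (n - k) lam n * a ^ k \<le> 2 ^ n * elem_sym n lam n"
proof -
  have "{S. S \<subseteq> {..<n} \<and> card S = n} = {{..<n}}"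
  proof (intro set_eqI iffI)
    fix S assume "S \<in> {S. S \<subseteq> {..<n} \<and> card S = n}"
    then show "S \<in> {{..<n}}" using card_subset_eq[of "{..<n}" S] by simp
  qed auto
  then have en: "elem_sym n lam n = (\<Prod>i<n. lam i)" unfolding elem_sym_def by simp
  have nonneg: "(\<Prod>i\<in>S. lam i) \<ge> 0" if "S \<subseteq> {..<n}" for S
  proof (rule prod_nonneg)
    fix i assume "i \<in> S"
    then have "a \<le> lam i" using lam that by blast
    then show "lam i \<ge> 0" using a by linarith
  qed
  have summand_bound: "(\<Prod>i\<in>S. lam i) * a ^ k \<le> (\<Prod>i<n. lam i)"
    if S: "S \<subseteq> {..<n}" "card S = n - k" for S
  proof -
    have "card ({..<n} - S) = k" using S k by (simp add: card_Diff_subset finite_subset)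
    then have "a ^ k = (\<Prod>i\<in>{..<n} - S. a)" by simp
    also have "\<dots> \<le> (\<Prod>i\<in>{..<n} - S. lam i)" by (rule prod_mono) (use lam a in auto)
    finally have "(\<Prod>i\<in>S. lam i) * a ^ k \<le> (\<Prod>i\<in>S. lam i) * (\<Prod>i\<in>{..<n} - S. lam i)"
      using nonneg[OF S(1)] by (rule mult_left_mono)
    also have "\<dots> = (\<Prod>i<n. lam i)" using prod.subset_diff[OF S(1), of lam] by (simp add: mult.commute)
    finally show ?thesis .
  qed
  define F where "F = {S. S \<subseteq> {..<n} \<and> card S = n - k}"
  have "card F \<le> card (Pow {..<n})" unfolding F_def by (intro card_mono) auto
  then have "card F \<le> 2 ^ n" by (simp add: card_Pow)
  then have "real (card F) \<le> real (2 ^ n)" by (rule of_nat_mono)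
  then have cF: "real (card F) \<le> 2 ^ n" by simp
  have "elem_sym (n - k) lam n * a ^ k = (\<Sum>S\<in>F. (\<Prod>i\<in>S. lam i) * a ^ k)"
    unfolding elem_sym_def F_def by (simp add: sum_distrib_right)
  also have "\<dots> \<le> real (card F) * (\<Prod>i<n. lam i)"
    by (rule sum_bounded_above) (use summand_bound in \<open>auto simp: F_def\<close>)
  also have "\<dots> \<le> 2 ^ n * (\<Prod>i<n. lam i)"
    by (rule mult_right_mono[OF cF nonneg]) simp
  finally show ?thesis unfolding en .
qed

lemma sigma_form_eq_elem_sym:
  assumes b: "diag_basis N T A b lam" and bil: "bilinear A" and sym: "\<And>x y. A x y = A y x"
    and T: "subspace T" "dim T = N"
  shows "sigma_form N T A m = elem_sym m lam N"
proof -
  have "sigma_form N T A m = (SOME s. \<exists>b lam. diag_basis N T A b lam \<and> s = elem_sym m lam N)"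
    unfolding sigma_form_def diag_basis_def elem_sym_def by simp
  also have "\<dots> = elem_sym m lam N"
  proof (rule some_equality)
    show "\<exists>b' lam'. diag_basis N T A b' lam' \<and> elem_sym m lam N = elem_sym m lam' N"
      using b by blast
    fix s assume "\<exists>b' lam'. diag_basis N T A b' lam' \<and> s = elem_sym m lam' N"
    then obtain b' lam' where b': "diag_basis N T A b' lam'" and s: "s = elem_sym m lam' N" by blast
    show "s = elem_sym m lam N" unfolding s
      by (rule elem_sym_eq_if_same_multiplicities)
        (simp add: dim_form_eigenspace[OF b' bil sym T, symmetric]
          dim_form_eigenspace[OF b bil sym T, symmetric])
  qed
  finally show ?thesis .
qed

section \<open>Smooth functions on the cap and the spherical Hessian\<close>

lemma cap_ext_smooth:
  assumes "smooth_on_cap \<theta> h"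
  obtains U where "open U" "cap \<theta> \<subseteq> U" "smooth_on U (cap_ext \<theta> h)"
    "\<forall>x\<in>cap \<theta>. cap_ext \<theta> h x = h x"
proof -
  have "\<exists>g U. open U \<and> cap \<theta> \<subseteq> U \<and> smooth_on U g \<and> (\<forall>x\<in>cap \<theta>. g x = h x)"
    using assms unfolding smooth_on_cap_def by blast
  then have "\<exists>U. open U \<and> cap \<theta> \<subseteq> U \<and> smooth_on U (cap_ext \<theta> h) \<and> (\<forall>x\<in>cap \<theta>. cap_ext \<theta> h x = h x)"
    unfolding cap_ext_def by (rule someI_ex)
  then show ?thesis using that by blast
qed

lemma cap_ext_eq:
  assumes "smooth_on_cap \<theta> h" "x \<in> cap \<theta>"
  shows "cap_ext \<theta> h x = h x"
proof -
  obtain U where "open U" "cap \<theta> \<subseteq> U" "smooth_on U (cap_ext \<theta> h)" "\<forall>x\<in>cap \<theta>. cap_ext \<theta> h x = h x"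
    by (rule cap_ext_smooth[OF assms(1)])
  then show ?thesis using assms(2) by blast
qed

lemma smooth_on_dd_differentiable:
  "smooth_on U g \<Longrightarrow> open U \<Longrightarrow> x \<in> U \<Longrightarrow> dd g vs differentiable (at x)"
  unfolding smooth_on_def by (simp add: differentiable_on_eq_differentiable_at)

lemma smooth_on_differentiable:
  "smooth_on U g \<Longrightarrow> open U \<Longrightarrow> x \<in> U \<Longrightarrow> g differentiable (at x)"
  using smooth_on_dd_differentiable[of U g x "[]"] by simp

lemma smooth_on_dir_deriv_differentiable:
  "smooth_on U g \<Longrightarrow> open U \<Longrightarrow> x \<in> U \<Longrightarrow> (\<lambda>x. dir_deriv g x v) differentiable (at x)"
  using smooth_on_dd_differentiable[of U g x "[v]"] by simp

lemma cap_ext_differentiable: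
  assumes "smooth_on_cap \<theta> h" "x \<in> cap \<theta>"
  shows "cap_ext \<theta> h differentiable (at x)"
proof -
  obtain U where "open U" "cap \<theta> \<subseteq> U" "smooth_on U (cap_ext \<theta> h)"
    "\<forall>x\<in>cap \<theta>. cap_ext \<theta> h x = h x"
    by (rule cap_ext_smooth[OF assms(1)])
  then show ?thesis using assms(2) by (intro smooth_on_differentiable[of U]) auto
qed

lemma continuous_on_cap_if_smooth:
  fixes f :: "'a::euclidean_space \<Rightarrow> real"
  assumes "smooth_on_cap \<theta> f"
  shows "continuous_on (cap \<theta>) f"
proof -
  obtain U where U: "open U" "cap \<theta> \<subseteq> U" "smooth_on U (cap_ext \<theta> f)"
    "\<forall>x\<in>cap \<theta>. cap_ext \<theta> f x = f x"
    by (rule cap_ext_smooth[OF assms])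
  have "continuous_on (cap \<theta>) (cap_ext \<theta> f)"
  proof (rule continuous_at_imp_continuous_on, rule ballI)
    fix x :: 'a assume "x \<in> cap \<theta>"
    then show "isCont (cap_ext \<theta> f) x"
      by (intro differentiable_imp_continuous_within cap_ext_differentiable[OF assms])
  qed
  then show ?thesis by (rule continuous_on_eq) (use U(4) in auto)
qed

lemma sph_form_eq:
  "sph_form \<theta> h \<xi> u v = dir_deriv (\<lambda>x. dir_deriv (cap_ext \<theta> h) x v) \<xi> u
     - dir_deriv (cap_ext \<theta> h) \<xi> (\<xi> - capc \<theta>) * (u \<bullet> v) + h \<xi> * (u \<bullet> v)"
  unfolding sph_form_def Let_def by simp

lemma sph_form_sym:
  assumes "smooth_on_cap \<theta> h" "\<xi> \<in> cap \<theta>"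
  shows "sph_form \<theta> h \<xi> u v = sph_form \<theta> h \<xi> v u"
proof -
  obtain U where U: "open U" "cap \<theta> \<subseteq> U" "smooth_on U (cap_ext \<theta> h)"
    "\<forall>x\<in>cap \<theta>. cap_ext \<theta> h x = h x"
    by (rule cap_ext_smooth[OF assms(1)])
  have xi: "\<xi> \<in> U" using U(2) assms(2) by blast
  have "\<forall>x\<in>U. cap_ext \<theta> h differentiable (at x)"
    using smooth_on_differentiable[OF U(3,1)] by blast
  then have "dir_deriv (\<lambda>x. dir_deriv (cap_ext \<theta> h) x u) \<xi> v
      = dir_deriv (\<lambda>x. dir_deriv (cap_ext \<theta> h) x v) \<xi> u"
    using dir_deriv_second_symmetric[OF U(1) xi] smooth_on_dir_deriv_differentiable[OF U(3,1) xi]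
    by blast
  then show ?thesis unfolding sph_form_eq by (simp add: inner_commute)
qed

lemma sph_form_bilinear:
  assumes "smooth_on_cap \<theta> h" "\<xi> \<in> cap \<theta>"
  shows "bilinear (sph_form \<theta> h \<xi>)"
proof -
  have lin: "linear (\<lambda>u. sph_form \<theta> h \<xi> u v)" for v
  proof -
    obtain U where U: "open U" "cap \<theta> \<subseteq> U" "smooth_on U (cap_ext \<theta> h)"
      "\<forall>x\<in>cap \<theta>. cap_ext \<theta> h x = h x"
      by (rule cap_ext_smooth[OF assms(1)])
    have D2: "linear (dir_deriv (\<lambda>x. dir_deriv (cap_ext \<theta> h) x v) \<xi>)"
      using U(2) assms(2) by (intro linear_frechet_derivative smooth_on_dir_deriv_differentiable[OF U(3,1)]) auto
    show ?thesis unfolding sph_form_eq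
      by (rule linearI) (simp_all add: linear_add[OF D2] linear_scale[OF D2] inner_add_left algebra_simps)
  qed
  moreover have "linear (sph_form \<theta> h \<xi> u)" for u
  proof -
    have "sph_form \<theta> h \<xi> u = (\<lambda>v. sph_form \<theta> h \<xi> v u)" by (rule ext) (rule sph_form_sym[OF assms])
    then show ?thesis using lin[of u] by simp
  qed
  ultimately show ?thesis unfolding bilinear_def by blast
qed

lemma sph_form_diag_basis:
  assumes "smooth_on_cap \<theta> h" "\<xi> \<in> cap \<theta>"
  shows "\<exists>b lam. diag_basis (DIM('a) - 1) (tang \<theta> \<xi>) (sph_form \<theta> h (\<xi>::'a::euclidean_space)) b lam"
  using symmetric_form_diag_basis[OF sph_form_bilinear[OF assms] sph_form_sym[OF assms]
      subspace_tang dim_tang[OF assms(2)]] .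

lemma sigma_cap_eq_elem_sym:
  fixes \<xi> :: "'a::euclidean_space"
  assumes "smooth_on_cap \<theta> h" "\<xi> \<in> cap \<theta>"
    and "diag_basis (DIM('a) - 1) (tang \<theta> \<xi>) (sph_form \<theta> h \<xi>) b lam"
  shows "sigma_cap \<theta> h m \<xi> = elem_sym m lam (DIM('a) - 1)"
  unfolding sigma_cap_def
  using sigma_form_eq_elem_sym[OF assms(3) sph_form_bilinear[OF assms(1,2)] sph_form_sym[OF assms(1,2)]
      subspace_tang dim_tang[OF assms(2)]] .

section \<open>First and second order conditions at a minimum over the cap\<close>

lemma cap_min_first_order:
  fixes F :: "'a::euclidean_space \<Rightarrow> real"
  assumes F: "(F has_derivative DF) (at \<xi>)" and xi: "\<xi> \<in> cap \<theta>"
    and min: "\<forall>x\<in>cap \<theta>. F \<xi> \<le> F x" and u: "u \<in> tang \<theta> \<xi>" "enters_cap \<theta> \<xi> u"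
  shows "DF u \<ge> 0"
proof (cases "u = 0")
  case True
  then show ?thesis using linear_0[OF has_derivative_linear[OF F]] by simp
next
  case False
  define u1 where "u1 = u /\<^sub>R norm u"
  have u1: "u1 \<in> tang \<theta> \<xi>" "norm u1 = 1" "enters_cap \<theta> \<xi> u1"
    using u False enters_cap_scaleR[of "inverse (norm u)"] unfolding u1_def
    by (auto intro: tang_scaleR)
  obtain \<delta> where \<delta>: "\<delta> > 0" "\<forall>t. 0 \<le> t \<and> t < \<delta> \<longrightarrow> great_circle \<theta> \<xi> u1 t \<in> cap \<theta>"
    using great_circle_in_cap[OF xi u1] by blast
  then have "\<forall>t. 0 \<le> t \<and> t < \<delta> \<longrightarrow> F (great_circle \<theta> \<xi> u1 0) \<le> F (great_circle \<theta> \<xi> u1 t)"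
    using min by simp
  then have "DF u1 \<ge> 0"
    by (rule deriv_nonneg_at_right_min[OF great_circle_compose_has_real_derivative_0[OF F] \<delta>(1)])
  moreover have "DF u = norm u * DF u1"
    using linear_scale[OF has_derivative_linear[OF F], of "norm u" u1] False unfolding u1_def by simp
  ultimately show ?thesis by simp
qed

lemma cap_min_interior_critical:
  fixes F :: "'a::euclidean_space \<Rightarrow> real"
  assumes F: "(F has_derivative DF) (at \<xi>)" and xi: "\<xi> \<in> cap \<theta>" "\<xi> \<bullet> capE < 0"
    and min: "\<forall>x\<in>cap \<theta>. F \<xi> \<le> F x" and u: "u \<in> tang \<theta> \<xi>"
  shows "DF u = 0"
proof -
  have "DF u \<ge> 0" "DF (- u) \<ge> 0"
    using cap_min_first_order[OF F xi(1) min] u tang_neg xi(2) unfolding enters_cap_def by auto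
  then show ?thesis using linear_neg[OF has_derivative_linear[OF F], of u] by simp
qed

text \<open>At a boundary minimum the inward direction -w and every tangent direction pushed slightly
  inwards, z - s w with s > 0, enter the cap; letting s tend to 0 kills the first derivative along
  the boundary.\<close>
lemma cap_min_boundary_first_order:
  fixes F :: "'a::euclidean_space \<Rightarrow> real"
  assumes F: "(F has_derivative DF) (at \<eta>)" and eta: "\<eta> \<in> cap \<theta>" "\<eta> \<bullet> capE = 0"
    and th: "0 < \<theta>" "\<theta> \<le> pi / 2" and min: "\<forall>x\<in>cap \<theta>. F \<eta> \<le> F x"
  defines "w \<equiv> capE + cos \<theta> *\<^sub>R (\<eta> - capc \<theta>)"
  shows "\<And>z. z \<in> tang \<theta> \<eta> \<Longrightarrow> z \<bullet> capE = 0 \<Longrightarrow> DF z = 0" and "DF w \<le> 0"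
proof -
  have lin: "linear DF" using has_derivative_linear[OF F] .
  have w: "w \<in> tang \<theta> \<eta>" "w \<bullet> capE > 0"
    using boundary_conormal_direction[OF eta] capillary_angle_bounds(1)[OF th] unfolding w_def by simp_all
  have first: "DF u \<ge> 0" if "u \<in> tang \<theta> \<eta>" "u \<bullet> capE < 0" for u
    using cap_min_first_order[OF F eta(1) min that(1)] that(2) unfolding enters_cap_def by simp
  have "DF (- w) \<ge> 0" using first[OF tang_neg[OF w(1)]] w(2) by simp
  then show Dw: "DF w \<le> 0" using linear_neg[OF lin, of w] by simp
  have half: "DF z \<ge> 0" if z: "z \<in> tang \<theta> \<eta>" "z \<bullet> capE = 0" for z
  proof (rule ccontr)
    assume "\<not> DF z \<ge> 0"
    define s where "s = - DF z / (2 * (\<bar>DF w\<bar> + 1))"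
    have s: "s > 0" unfolding s_def using \<open>\<not> DF z \<ge> 0\<close> by (intro divide_pos_pos) auto
    have "DF (z - s *\<^sub>R w) \<ge> 0"
      using first[of "z - s *\<^sub>R w"] z w s by (simp add: tang_diff tang_scaleR inner_diff_left)
    then have "- DF z \<le> s * \<bar>DF w\<bar>"
      using Dw s linear_diff[OF lin] linear_scale[OF lin] by (simp add: abs_of_nonpos)
    also have "\<dots> < s * (2 * (\<bar>DF w\<bar> + 1))" using s by simp
    also have "\<dots> = - DF z" unfolding s_def by (simp add: add_nonneg_pos)
    finally show False by simp
  qed
  show "DF z = 0" if "z \<in> tang \<theta> \<eta>" "z \<bullet> capE = 0" for z
  proof -
    have "DF (- z) \<ge> 0" using half[OF tang_neg[OF that(1)]] that(2) by simp
    then show ?thesis using half[OF that] linear_neg[OF lin, of z] by simp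
  qed
qed

lemma great_circle_second_order_min:
  fixes g :: "'a::euclidean_space \<Rightarrow> real"
  assumes U: "open U" "\<xi> \<in> U" and dg: "\<forall>x\<in>U. g differentiable (at x)"
   and du: "(\<lambda>x. dir_deriv g x u) differentiable (at \<xi>)"
   and dN: "(\<lambda>x. dir_deriv g x (\<xi> - capc \<theta>)) differentiable (at \<xi>)"
   and min: "\<delta> > 0" "\<forall>t. 0 \<le> t \<and> t < \<delta> \<longrightarrow> g \<xi> \<le> g (great_circle \<theta> \<xi> u t)"
   and crit: "dir_deriv g \<xi> u = 0"
  shows "dir_deriv (\<lambda>x. dir_deriv g x u) \<xi> u - dir_deriv g \<xi> (\<xi> - capc \<theta>) \<ge> 0"
proof -
  define N where "N = \<xi> - capc \<theta>"
  define \<gamma> where "\<gamma> = great_circle \<theta> \<xi> u"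
  obtain \<epsilon> where \<epsilon>: "\<epsilon> > 0" "\<forall>t. \<bar>t\<bar> < \<epsilon> \<longrightarrow> \<gamma> t \<in> U"
    using continuous_at_imp_near[OF isCont_great_circle[where \<theta> = \<theta> and \<xi> = \<xi> and u = u and t = 0] U(1)]
      U(2) unfolding \<gamma>_def by auto
  define \<psi> where "\<psi> = (\<lambda>t. - sin t * dir_deriv g (\<gamma> t) N + cos t * dir_deriv g (\<gamma> t) u)"
  have d\<phi>: "((\<lambda>t. g (\<gamma> t)) has_real_derivative \<psi> t) (at t)" if "\<bar>t\<bar> < \<epsilon>" for t
  proof -
    have F: "(g has_derivative dir_deriv g (\<gamma> t)) (at (\<gamma> t))"
      using dg \<epsilon> that frechet_derivative_works by blast
    note lin = has_derivative_linear[OF F]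
    show ?thesis
      using great_circle_compose_has_real_derivative[OF F[unfolded \<gamma>_def]]
        linear_add[OF lin] linear_diff[OF lin] linear_scale[OF lin] unfolding \<psi>_def \<gamma>_def N_def by simp
  qed
  have \<psi>0: "\<psi> 0 = 0" unfolding \<psi>_def \<gamma>_def using crit by simp
  have "((\<lambda>t. dir_deriv g (\<gamma> t) N) has_real_derivative dir_deriv (\<lambda>x. dir_deriv g x N) \<xi> u) (at 0)"
    "((\<lambda>t. dir_deriv g (\<gamma> t) u) has_real_derivative dir_deriv (\<lambda>x. dir_deriv g x u) \<xi> u) (at 0)"
    using great_circle_compose_has_real_derivative_0 frechet_derivative_works dN du
    unfolding \<gamma>_def N_def by blast+
  then have "(\<psi> has_real_derivative
      (- cos 0 * dir_deriv g (\<gamma> 0) N + dir_deriv (\<lambda>x. dir_deriv g x N) \<xi> u * - sin 0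
       + (- sin 0 * dir_deriv g (\<gamma> 0) u + dir_deriv (\<lambda>x. dir_deriv g x u) \<xi> u * cos 0))) (at 0)"
    unfolding \<psi>_def by (intro DERIV_add DERIV_mult DERIV_minus DERIV_sin DERIV_cos)
  then have d\<psi>: "(\<psi> has_real_derivative
      dir_deriv (\<lambda>x. dir_deriv g x u) \<xi> u - dir_deriv g \<xi> N) (at 0)" unfolding \<gamma>_def by simp
  have "\<forall>t. 0 \<le> t \<and> t < \<delta> \<longrightarrow> g (\<gamma> 0) \<le> g (\<gamma> t)" using min(2) unfolding \<gamma>_def by simp
  from deriv2_nonneg_at_right_min[OF \<epsilon>(1) d\<phi> \<psi>0 d\<psi> min(1) this] show ?thesis unfolding N_def .
qed

section \<open>The minimum of a solution of the Neumann problem\<close>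

lemma cap_ext_min:
  assumes sm: "smooth_on_cap \<theta> h" and xi: "\<xi>0 \<in> cap \<theta>" and mn: "\<forall>\<xi>\<in>cap \<theta>. h \<xi>0 \<le> h \<xi>"
  shows "(cap_ext \<theta> h has_derivative dir_deriv (cap_ext \<theta> h) \<xi>0) (at \<xi>0)"
    and "\<forall>x\<in>cap \<theta>. cap_ext \<theta> h \<xi>0 \<le> cap_ext \<theta> h x"
proof -
  show "(cap_ext \<theta> h has_derivative dir_deriv (cap_ext \<theta> h) \<xi>0) (at \<xi>0)"
    using cap_ext_differentiable[OF sm xi] frechet_derivative_works by blast
  show "\<forall>x\<in>cap \<theta>. cap_ext \<theta> h \<xi>0 \<le> cap_ext \<theta> h x" using mn xi cap_ext_eq[OF sm] by simp
qed

text \<open>At a boundary minimum the derivative in the inward conormal direction is nonnegative, while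
  the Neumann condition makes it equal to -cot \<theta> h < 0 unless \<theta> = pi / 2.\<close>
lemma neumann_min_boundary:
  fixes h :: "'a::euclidean_space \<Rightarrow> real"
  assumes th: "0 < \<theta>" "\<theta> \<le> pi / 2" and sm: "smooth_on_cap \<theta> h" and pos: "\<forall>\<xi>\<in>cap \<theta>. h \<xi> > 0"
    and nb: "neumann_bc \<theta> h" and xi: "\<xi>0 \<in> cap \<theta>" and mn: "\<forall>\<xi>\<in>cap \<theta>. h \<xi>0 \<le> h \<xi>"
    and b: "\<xi>0 \<bullet> capE = 0"
  shows "cos \<theta> = 0" and "\<And>u. u \<in> tang \<theta> \<xi>0 \<Longrightarrow> dir_deriv (cap_ext \<theta> h) \<xi>0 u = 0"
proof -
  define D where "D = dir_deriv (cap_ext \<theta> h) \<xi>0"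
  note F = cap_ext_min(1)[OF sm xi mn, folded D_def] and min = cap_ext_min(2)[OF sm xi mn]
  have lin: "linear D" using has_derivative_linear[OF F] .
  define w where "w = capE + cos \<theta> *\<^sub>R (\<xi>0 - capc \<theta>)"
  have w: "w \<in> tang \<theta> \<xi>0" "w \<bullet> capE = (sin \<theta>)\<^sup>2" "conormal \<theta> \<xi>0 = w /\<^sub>R norm w"
    using boundary_conormal_direction[OF xi b] unfolding w_def by auto
  have "D w \<le> 0" using cap_min_boundary_first_order(2)[OF F xi b th min] unfolding w_def .
  have "norm w > 0" using w(2) capillary_angle_bounds(1)[OF th] by auto
  have "D (conormal \<theta> \<xi>0) = cot \<theta> * h \<xi>0"
    using nb xi b unfolding neumann_bc_def D_def by simp
  then have Dw: "D w = norm w * (cot \<theta> * h \<xi>0)"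
    using linear_scale[OF lin, of "norm w" "w /\<^sub>R norm w"] \<open>norm w > 0\<close> w(3) by simp
  have "cot \<theta> \<ge> 0" using capillary_angle_bounds[OF th] unfolding cot_def by simp
  moreover have "h \<xi>0 > 0" using pos xi by blast
  ultimately have "cot \<theta> * h \<xi>0 \<ge> 0" by simp
  moreover have "norm w * (cot \<theta> * h \<xi>0) \<le> 0" using Dw \<open>D w \<le> 0\<close> by simp
  then have "cot \<theta> * h \<xi>0 \<le> 0" using \<open>norm w > 0\<close> by (simp add: mult_le_0_iff)
  ultimately have "cot \<theta> * h \<xi>0 = 0" by simp
  then show "cos \<theta> = 0" using \<open>h \<xi>0 > 0\<close> capillary_angle_bounds(1)[OF th] unfolding cot_def by simp
  show "dir_deriv (cap_ext \<theta> h) \<xi>0 u = 0" if u: "u \<in> tang \<theta> \<xi>0" for u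
  proof -
    obtain z a where z: "z \<in> tang \<theta> \<xi>0" "z \<bullet> capE = 0" "u = z + a *\<^sub>R w"
      using boundary_tang_decompose[OF xi b th u] unfolding w_def by blast
    have "D z = 0" using cap_min_boundary_first_order(1)[OF F xi b th min z(1,2)] .
    then show ?thesis
      using z(3) Dw \<open>cot \<theta> * h \<xi>0 = 0\<close> linear_add[OF lin] linear_scale[OF lin] unfolding D_def by simp
  qed
qed

lemma neumann_min_critical:
  fixes h :: "'a::euclidean_space \<Rightarrow> real"
  assumes th: "0 < \<theta>" "\<theta> \<le> pi / 2" and sm: "smooth_on_cap \<theta> h" and pos: "\<forall>\<xi>\<in>cap \<theta>. h \<xi> > 0"
    and nb: "neumann_bc \<theta> h" and xi: "\<xi>0 \<in> cap \<theta>" and mn: "\<forall>\<xi>\<in>cap \<theta>. h \<xi>0 \<le> h \<xi>"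
    and u: "u \<in> tang \<theta> \<xi>0"
  shows "dir_deriv (cap_ext \<theta> h) \<xi>0 u = 0"
proof (cases "\<xi>0 \<bullet> capE < 0")
  case True
  show ?thesis
    using cap_min_interior_critical[OF cap_ext_min(1)[OF sm xi mn] xi True cap_ext_min(2)[OF sm xi mn] u] .
next
  case False
  then have "\<xi>0 \<bullet> capE = 0" using cap_memD(3)[OF xi] by simp
  then show ?thesis using neumann_min_boundary(2)[OF th sm pos nb xi mn _ u] by blast
qed

lemma neumann_min_sph_form_ge:
  fixes h :: "'a::euclidean_space \<Rightarrow> real"
  assumes th: "0 < \<theta>" "\<theta> \<le> pi / 2" and sm: "smooth_on_cap \<theta> h" and pos: "\<forall>\<xi>\<in>cap \<theta>. h \<xi> > 0"
    and nb: "neumann_bc \<theta> h" and xi: "\<xi>0 \<in> cap \<theta>" and mn: "\<forall>\<xi>\<in>cap \<theta>. h \<xi>0 \<le> h \<xi>"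
    and u: "u \<in> tang \<theta> \<xi>0" "norm u = 1"
  shows "h \<xi>0 \<le> sph_form \<theta> h \<xi>0 u u"
proof -
  define g where "g = cap_ext \<theta> h"
  obtain U where U: "open U" "cap \<theta> \<subseteq> U" "smooth_on U g" "\<forall>x\<in>cap \<theta>. g x = h x"
    unfolding g_def by (rule cap_ext_smooth[OF sm])
  have xU: "\<xi>0 \<in> U" using U(2) xi by blast
  define s where "s = (if u \<bullet> capE \<le> 0 then u else - u)"
  have s: "s \<in> tang \<theta> \<xi>0" "norm s = 1" using u tang_neg unfolding s_def by auto
  have "enters_cap \<theta> \<xi>0 s"
  proof (cases "\<xi>0 \<bullet> capE < 0")
    case False
    then have "\<xi>0 \<bullet> capE = 0" using cap_memD(3)[OF xi] by simp
    then have "cos \<theta> = 0" by (rule neumann_min_boundary(1)[OF th sm pos nb xi mn])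
    then show ?thesis unfolding enters_cap_def s_def by auto
  qed (simp add: enters_cap_def)
  then obtain \<delta> where \<delta>: "\<delta> > 0" "\<forall>t. 0 \<le> t \<and> t < \<delta> \<longrightarrow> great_circle \<theta> \<xi>0 s t \<in> cap \<theta>"
    using great_circle_in_cap[OF xi s] by blast
  have "\<forall>t. 0 \<le> t \<and> t < \<delta> \<longrightarrow> g \<xi>0 \<le> g (great_circle \<theta> \<xi>0 s t)"
    using \<delta>(2) mn U(4) xi by simp
  then have "dir_deriv (\<lambda>x. dir_deriv g x s) \<xi>0 s - dir_deriv g \<xi>0 (\<xi>0 - capc \<theta>) \<ge> 0"
    using great_circle_second_order_min[OF U(1) xU _ _ _ \<delta>(1)]
      smooth_on_differentiable[OF U(3,1)] smooth_on_dir_deriv_differentiable[OF U(3,1) xU]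
      neumann_min_critical[OF th sm pos nb xi mn s(1)] unfolding g_def by blast
  moreover have "s \<bullet> s = 1" using s(2) by (simp add: norm_eq_1)
  ultimately have "h \<xi>0 \<le> sph_form \<theta> h \<xi>0 s s" unfolding sph_form_eq g_def by simp
  moreover have "sph_form \<theta> h \<xi>0 s s = sph_form \<theta> h \<xi>0 u u"
    using sph_form_bilinear[OF sm xi] unfolding s_def by (simp add: bilinear_lneg bilinear_rneg)
  ultimately show ?thesis by simp
qed

lemma neumann_min_pow_le:
  fixes h f :: "'a::euclidean_space \<Rightarrow> real"
  assumes th: "0 < \<theta>" "\<theta> \<le> pi / 2" and k: "k \<le> DIM('a) - 1"
    and sm: "smooth_on_cap \<theta> h" and pos: "\<forall>\<xi>\<in>cap \<theta>. h \<xi> > 0" and nb: "neumann_bc \<theta> h"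
    and xi: "\<xi>0 \<in> cap \<theta>" and mn: "\<forall>\<xi>\<in>cap \<theta>. h \<xi>0 \<le> h \<xi>"
    and eq: "sigma_cap \<theta> h (DIM('a) - 1) \<xi>0 / sigma_cap \<theta> h (DIM('a) - 1 - k) \<xi>0 = inverse (f \<xi>0)"
    and f: "f \<xi>0 > 0"
  shows "h \<xi>0 ^ k \<le> 2 ^ (DIM('a) - 1) / f \<xi>0"
proof -
  define n where "n = DIM('a) - 1"
  obtain b lam where b: "diag_basis n (tang \<theta> \<xi>0) (sph_form \<theta> h \<xi>0) b lam"
    using sph_form_diag_basis[OF sm xi] unfolding n_def by blast
  have lam_ge: "\<forall>i<n. h \<xi>0 \<le> lam i"
  proof (intro allI impI)
    fix i assume "i < n"
    then have "b i \<in> tang \<theta> \<xi>0" "norm (b i) = 1" "sph_form \<theta> h \<xi>0 (b i) (b i) = lam i"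
      using b unfolding diag_basis_def by (auto simp: norm_eq_1)
    then show "h \<xi>0 \<le> lam i" using neumann_min_sph_form_ge[OF th sm pos nb xi mn] by metis
  qed
  define P where "P = elem_sym n lam n"
  define Q where "Q = elem_sym (n - k) lam n"
  have ratio: "P / Q = inverse (f \<xi>0)"
    using eq sigma_cap_eq_elem_sym[OF sm xi b[unfolded n_def]] unfolding P_def Q_def n_def by simp
  have bound: "Q * h \<xi>0 ^ k \<le> 2 ^ n * P"
    unfolding P_def Q_def using elem_sym_lower_bound[OF lam_ge] pos xi k unfolding n_def by simp
  have "Q \<ge> 0" unfolding Q_def elem_sym_def
    using lam_ge pos xi by (fastforce intro!: sum_nonneg prod_nonneg intro: order_trans[OF less_imp_le])
  moreover have "Q \<noteq> 0" using ratio f by auto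
  ultimately have "Q > 0" by simp
  then have "P = Q / f \<xi>0" using ratio f by (simp add: field_simps)
  then have "2 ^ n * P = Q * (2 ^ n / f \<xi>0)" by simp
  then have "Q * h \<xi>0 ^ k \<le> Q * (2 ^ n / f \<xi>0)" using bound by linarith
  then show ?thesis using \<open>Q > 0\<close> mult_le_cancel_left_pos unfolding n_def by blast
qed

lemma neumann_min_le:
  fixes h f :: "'a::euclidean_space \<Rightarrow> real"
  assumes th: "0 < \<theta>" "\<theta> \<le> pi / 2" and k: "1 \<le> k" "k \<le> DIM('a) - 1"
    and sm: "smooth_on_cap \<theta> h" and pos: "\<forall>\<xi>\<in>cap \<theta>. h \<xi> > 0" and nb: "neumann_bc \<theta> h"
    and xi: "\<xi>0 \<in> cap \<theta>" and mn: "\<forall>\<xi>\<in>cap \<theta>. h \<xi>0 \<le> h \<xi>"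
    and eq: "\<forall>\<xi>\<in>cap \<theta>. sigma_cap \<theta> h (DIM('a) - 1) \<xi> / sigma_cap \<theta> h (DIM('a) - 1 - k) \<xi>
               = inverse (f \<xi>)"
    and fm: "0 < fm" "\<forall>\<xi>\<in>cap \<theta>. fm \<le> f \<xi>"
  shows "h \<xi>0 \<le> max 1 (2 ^ (DIM('a) - 1) / fm)"
proof (cases "h \<xi>0 \<le> 1")
  case False
  have f: "0 < f \<xi>0" "fm \<le> f \<xi>0" using fm xi by auto
  have "h \<xi>0 ^ 1 \<le> h \<xi>0 ^ k" using False k(1) by (intro power_increasing) auto
  also have "\<dots> \<le> 2 ^ (DIM('a) - 1) / f \<xi>0"
    using neumann_min_pow_le[where f = f, OF th k(2) sm pos nb xi mn _ f(1)] eq xi by blast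
  also have "\<dots> \<le> 2 ^ (DIM('a) - 1) / fm" using f fm(1) by (intro divide_left_mono) auto
  finally show ?thesis by simp
qed simp

section \<open>The support function of a capillary hypersurface\<close>

definition height_ext :: "real \<Rightarrow> ('a::euclidean_space \<Rightarrow> 'a) \<Rightarrow> 'a \<Rightarrow> 'a \<Rightarrow> real" where
  "height_ext \<theta> X y x = (\<Sum>b\<in>Basis. (y \<bullet> b) * cap_ext \<theta> (\<lambda>x. X x \<bullet> b) x)"

lemma capillary_param_component:
  assumes cp: "capillary_param \<theta> X" and x: "x \<in> cap \<theta>" and b: "b \<in> Basis"
  shows "cap_ext \<theta> (\<lambda>x. X x \<bullet> b) differentiable (at x)" "cap_ext \<theta> (\<lambda>x. X x \<bullet> b) x = X x \<bullet> b"
proof -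
  have sm: "smooth_on_cap \<theta> (\<lambda>x. X x \<bullet> b)" using cp b unfolding capillary_param_def by blast
  show "cap_ext \<theta> (\<lambda>x. X x \<bullet> b) differentiable (at x)" by (rule cap_ext_differentiable[OF sm x])
  show "cap_ext \<theta> (\<lambda>x. X x \<bullet> b) x = X x \<bullet> b" by (rule cap_ext_eq[OF sm x])
qed

lemma height_ext_eq:
  assumes "capillary_param \<theta> X" "x \<in> cap \<theta>"
  shows "height_ext \<theta> X y x = y \<bullet> X x"
  unfolding height_ext_def using capillary_param_component(2)[OF assms]
  by (simp add: euclidean_inner[of y "X x"] mult.commute)

lemma height_ext_has_derivative:
  assumes "capillary_param \<theta> X" "x \<in> cap \<theta>"
  shows "(height_ext \<theta> X y has_derivative (\<lambda>w. y \<bullet> vdiff \<theta> X x w)) (at x)"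
proof -
  have "(height_ext \<theta> X y has_derivative
      (\<lambda>w. \<Sum>b\<in>Basis. (y \<bullet> b) * dir_deriv (cap_ext \<theta> (\<lambda>x. X x \<bullet> b)) x w)) (at x)"
    unfolding height_ext_def
    using capillary_param_component(1)[OF assms] frechet_derivative_works
    by (intro has_derivative_sum has_derivative_mult_right) blast
  moreover have "(\<lambda>w. \<Sum>b\<in>Basis. (y \<bullet> b) * dir_deriv (cap_ext \<theta> (\<lambda>x. X x \<bullet> b)) x w)
      = (\<lambda>w. y \<bullet> vdiff \<theta> X x w)"
    unfolding vdiff_def by (simp add: inner_sum_right mult.commute)
  ultimately show ?thesis by simp
qed

lemma linear_vdiff:
  assumes "capillary_param \<theta> X" "x \<in> cap \<theta>"
  shows "linear (vdiff \<theta> X x)"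
proof -
  have lin: "linear (dir_deriv (cap_ext \<theta> (\<lambda>x. X x \<bullet> b)) x)" if "b \<in> Basis" for b
    using capillary_param_component(1)[OF assms that] by (rule linear_frechet_derivative)
  show ?thesis unfolding vdiff_def dd.simps
    by (rule linearI)
      (simp_all add: linear_add[OF lin] linear_scale[OF lin] scaleR_add_left sum.distrib
        scaleR_sum_right cong: sum.cong)
qed

lemma continuous_on_capillary_param:
  assumes "capillary_param \<theta> (X::'a::euclidean_space \<Rightarrow> 'a)"
  shows "continuous_on (cap \<theta>) X"
proof -
  have "continuous_on (cap \<theta>) (cap_ext \<theta> (\<lambda>x. X x \<bullet> b))" if "b \<in> Basis" for b
    using capillary_param_component(1)[OF assms _ that] differentiable_imp_continuous_within
    by (blast intro: continuous_at_imp_continuous_on)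
  then have "continuous_on (cap \<theta>) (\<lambda>x. \<Sum>b\<in>Basis. cap_ext \<theta> (\<lambda>x. X x \<bullet> b) x *\<^sub>R b)"
    by (intro continuous_on_sum continuous_on_scaleR continuous_on_const)
  then show ?thesis
    by (rule continuous_on_eq) (simp add: capillary_param_component(2)[OF assms] euclidean_representation)
qed

lemma capillary_param_annihilator:
  assumes cp: "capillary_param \<theta> X" and eta: "\<eta> \<in> cap \<theta>"
    and z: "\<And>u. u \<in> tang \<theta> \<eta> \<Longrightarrow> z \<bullet> vdiff \<theta> X \<eta> u = 0"
  shows "z = (z \<bullet> (\<eta> - capc \<theta>)) *\<^sub>R (\<eta> - capc \<theta>)"
proof (rule ccontr)
  define N where "N = \<eta> - capc \<theta>"
  define zT where "zT = z - (z \<bullet> N) *\<^sub>R N"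
  assume "\<not> ?thesis"
  then have "zT \<noteq> 0" unfolding zT_def N_def by simp
  have "zT \<bullet> N = 0" using cap_memD(2)[OF eta] unfolding zT_def N_def by (simp add: inner_diff_left)
  then have zT: "zT \<in> tang \<theta> \<eta>" unfolding tang_def N_def by simp
  have "vdiff \<theta> X \<eta> zT \<bullet> N = 0" "zT \<bullet> vdiff \<theta> X \<eta> zT > 0"
    using cp eta zT \<open>zT \<noteq> 0\<close> unfolding capillary_param_def N_def by blast+
  then have "z \<bullet> vdiff \<theta> X \<eta> zT > 0" unfolding zT_def by (simp add: inner_diff_left inner_commute)
  then show False using z[OF zT] by simp
qed

lemma capillary_boundary_coefficients:
  fixes b c s :: real
  assumes c: "c \<ge> 0" and s: "0 \<le> s" "s < 1" and e: "c - b * s \<le> - s"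
    and n: "c\<^sup>2 - 2 * b * c * s + b\<^sup>2 = 1"
  shows "c = 0 \<and> (b = 1 \<or> b = -1)"
proof -
  have "c = 0"
  proof (rule ccontr)
    assume "c \<noteq> 0"
    then have "c > 0" using c by simp
    then have pos: "c * (1 - s\<^sup>2) > 0" using s by (simp add: power_less_one_iff)
    have "s > 0" using e \<open>c > 0\<close> s(1) by (cases "s = 0") auto
    have "(b - c * s)\<^sup>2 = 1 - c\<^sup>2 * (1 - s\<^sup>2)" using n by (simp add: power2_eq_square algebra_simps)
    also have "\<dots> < 1" using mult_pos_pos[OF \<open>c > 0\<close> pos] by (simp add: power2_eq_square mult.assoc)
    finally have "\<bar>b - c * s\<bar> < 1" by (simp only: abs_square_less_1)
    then have "b - c * s < 1" by simp
    then have "(b - c * s) * s < s" using \<open>s > 0\<close> by (simp add: mult_less_cancel_right)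
    then have "c * (1 - s\<^sup>2) < 0" using e by (simp add: power2_eq_square algebra_simps)
    then show False using pos by simp
  qed
  moreover have "b\<^sup>2 = 1" using n \<open>c = 0\<close> by simp
  ultimately show ?thesis by (simp add: power2_eq_1_iff)
qed

lemma height_max_critical:
  fixes X :: "'a::euclidean_space \<Rightarrow> 'a"
  assumes th: "0 < \<theta>" "\<theta> \<le> pi / 2" and cp: "capillary_param \<theta> X" and eta: "\<eta> \<in> cap \<theta>"
    and max: "\<forall>x\<in>cap \<theta>. y \<bullet> X x \<le> y \<bullet> X \<eta>"
  shows "\<eta> \<bullet> capE < 0 \<Longrightarrow> u \<in> tang \<theta> \<eta> \<Longrightarrow> y \<bullet> vdiff \<theta> X \<eta> u = 0"
    and "\<eta> \<bullet> capE = 0 \<Longrightarrow> z \<in> tang \<theta> \<eta> \<Longrightarrow> z \<bullet> capE = 0 \<Longrightarrow> y \<bullet> vdiff \<theta> X \<eta> z = 0"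
    and "\<eta> \<bullet> capE = 0 \<Longrightarrow> y \<bullet> vdiff \<theta> X \<eta> (capE + cos \<theta> *\<^sub>R (\<eta> - capc \<theta>)) \<ge> 0"
proof -
  have F: "((\<lambda>x. - height_ext \<theta> X y x) has_derivative (\<lambda>w. - (y \<bullet> vdiff \<theta> X \<eta> w))) (at \<eta>)"
    using height_ext_has_derivative[OF cp eta] by (rule has_derivative_minus)
  have min: "\<forall>x\<in>cap \<theta>. - height_ext \<theta> X y \<eta> \<le> - height_ext \<theta> X y x"
    using max eta height_ext_eq[OF cp] by simp
  show "y \<bullet> vdiff \<theta> X \<eta> u = 0" if "\<eta> \<bullet> capE < 0" "u \<in> tang \<theta> \<eta>"
    using cap_min_interior_critical[OF F eta that(1) min that(2)] by simp
  show "y \<bullet> vdiff \<theta> X \<eta> z = 0" if "\<eta> \<bullet> capE = 0" "z \<in> tang \<theta> \<eta>" "z \<bullet> capE = 0"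
    using cap_min_boundary_first_order(1)[OF F eta that(1) th min that(2,3)] by simp
  show "y \<bullet> vdiff \<theta> X \<eta> (capE + cos \<theta> *\<^sub>R (\<eta> - capc \<theta>)) \<ge> 0" if "\<eta> \<bullet> capE = 0"
    using cap_min_boundary_first_order(2)[OF F eta that th min] by simp
qed

text \<open>At a boundary maximum the height function in direction capE is maximal too, since X maps
  the cap into the closed half space and its boundary into the hyperplane.  Subtracting the right
  multiple of capE from v gives a covector killing the whole differential of X.\<close>
lemma support_max_boundary_split:
  fixes X :: "'a::euclidean_space \<Rightarrow> 'a"
  assumes th: "0 < \<theta>" "\<theta> \<le> pi / 2" and cp: "capillary_param \<theta> X"
    and eta: "\<eta> \<in> cap \<theta>" "\<eta> \<bullet> capE = 0" and max: "\<forall>x\<in>cap \<theta>. v \<bullet> X x \<le> v \<bullet> X \<eta>"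
  obtains c where "c \<ge> 0" "v - c *\<^sub>R capE = ((v - c *\<^sub>R capE) \<bullet> (\<eta> - capc \<theta>)) *\<^sub>R (\<eta> - capc \<theta>)"
proof -
  define N where "N = \<eta> - capc \<theta>"
  define L where "L = vdiff \<theta> X \<eta>"
  define w where "w = capE + cos \<theta> *\<^sub>R N"
  have lin: "linear L" unfolding L_def by (rule linear_vdiff[OF cp eta(1)])
  have w: "w \<in> tang \<theta> \<eta>" "w \<noteq> 0"
    using boundary_conormal_direction[OF eta] capillary_angle_bounds(1)[OF th]
    unfolding w_def N_def by auto
  have "capE \<bullet> X x \<le> capE \<bullet> X \<eta>" if "x \<in> cap \<theta>" for x
    using cp that eta cap_memD(3)[OF that] unfolding capillary_param_def
    by (cases "x \<bullet> capE < 0") (auto simp: inner_commute intro: less_imp_le)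
  then have eL: "capE \<bullet> L z = 0" if "z \<in> tang \<theta> \<eta>" "z \<bullet> capE = 0" for z
    using height_max_critical(2)[OF th cp eta(1) _ eta(2) that] unfolding L_def by blast
  have vL: "v \<bullet> L z = 0" if "z \<in> tang \<theta> \<eta>" "z \<bullet> capE = 0" for z
    using height_max_critical(2)[OF th cp eta(1) max eta(2) that] unfolding L_def .
  have "v \<bullet> L w \<ge> 0"
    using height_max_critical(3)[OF th cp eta(1) max eta(2)] unfolding L_def w_def N_def .
  have "L w \<bullet> N = 0" "w \<bullet> L w > 0"
    using cp eta(1) w unfolding capillary_param_def L_def N_def by blast+
  then have eLw: "capE \<bullet> L w = w \<bullet> L w" unfolding w_def by (simp add: inner_add_left inner_commute)
  define c where "c = (v \<bullet> L w) / (capE \<bullet> L w)"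
  have "c \<ge> 0" unfolding c_def eLw using \<open>v \<bullet> L w \<ge> 0\<close> \<open>w \<bullet> L w > 0\<close> by simp
  moreover have "(v - c *\<^sub>R capE) \<bullet> vdiff \<theta> X \<eta> u = 0" if u: "u \<in> tang \<theta> \<eta>" for u
  proof -
    obtain z a where z: "z \<in> tang \<theta> \<eta>" "z \<bullet> capE = 0" "u = z + a *\<^sub>R w"
      using boundary_tang_decompose[OF eta th u] unfolding w_def N_def by blast
    have "(v - c *\<^sub>R capE) \<bullet> L w = 0" unfolding c_def using \<open>w \<bullet> L w > 0\<close> by (simp add: inner_diff_left eLw)
    then show ?thesis unfolding z(3) L_def[symmetric]
      using vL[OF z(1,2)] eL[OF z(1,2)] linear_add[OF lin] linear_scale[OF lin]
      by (simp add: inner_add_right inner_diff_left)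
  qed
  then have "v - c *\<^sub>R capE = ((v - c *\<^sub>R capE) \<bullet> N) *\<^sub>R N"
    unfolding N_def by (rule capillary_param_annihilator[OF cp eta(1)])
  ultimately show ?thesis using that unfolding N_def by blast
qed

lemma support_max_normal:
  fixes X :: "'a::euclidean_space \<Rightarrow> 'a"
  assumes th: "0 < \<theta>" "\<theta> \<le> pi / 2" and cp: "capillary_param \<theta> X"
    and xi: "\<xi> \<in> cap \<theta>" and eta: "\<eta> \<in> cap \<theta>"
    and max: "\<forall>x\<in>cap \<theta>. (\<xi> - capc \<theta>) \<bullet> X x \<le> (\<xi> - capc \<theta>) \<bullet> X \<eta>"
  shows "\<xi> - capc \<theta> = \<eta> - capc \<theta> \<or> \<xi> - capc \<theta> = - (\<eta> - capc \<theta>)"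
proof -
  define v where "v = \<xi> - capc \<theta>"
  define N where "N = \<eta> - capc \<theta>"
  have vv: "v \<bullet> v = 1" and NN: "N \<bullet> N = 1"
    using cap_memD(2)[OF xi] cap_memD(2)[OF eta] unfolding v_def N_def by simp_all
  obtain c b where cb: "c = 0 \<and> (b = 1 \<or> b = -1)" "v = c *\<^sub>R capE + b *\<^sub>R N"
  proof (cases "\<eta> \<bullet> capE < 0")
    case True
    have vN: "v = (v \<bullet> N) *\<^sub>R N" unfolding N_def
      using capillary_param_annihilator[OF cp eta] height_max_critical(1)[OF th cp eta max True]
      unfolding v_def by blast
    then have "(v \<bullet> N)\<^sup>2 = 1" using vv NN by (metis inner_scaleR_left inner_scaleR_right mult.assoc
        mult.right_neutral power2_eq_square)
    then show ?thesis using that[of 0 "v \<bullet> N"] vN by (simp add: power2_eq_1_iff)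
  next
    case False
    then have b: "\<eta> \<bullet> capE = 0" using cap_memD(3)[OF eta] by simp
    obtain c where c: "c \<ge> 0" "v - c *\<^sub>R capE = ((v - c *\<^sub>R capE) \<bullet> N) *\<^sub>R N"
      using support_max_boundary_split[OF th cp eta b max] unfolding v_def N_def by blast
    define b where "b = (v - c *\<^sub>R capE) \<bullet> N"
    have v: "v = c *\<^sub>R capE + b *\<^sub>R N" using c(2) unfolding b_def by (simp add: algebra_simps)
    have Ne: "N \<bullet> capE = - cos \<theta>" using cap_memD(4)[OF eta] b unfolding N_def by simp
    have "c\<^sup>2 - 2 * b * c * cos \<theta> + b\<^sup>2 = 1"
      using vv NN Ne unfolding v
      by (simp add: inner_add_left inner_add_right inner_commute power2_eq_square algebra_simps)
    moreover have "c - b * cos \<theta> \<le> - cos \<theta>"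
      using cap_memD(3,4)[OF xi] Ne unfolding v_def[symmetric] v by (simp add: inner_add_left)
    ultimately show ?thesis
      using that v capillary_boundary_coefficients[OF c(1)] capillary_angle_bounds(2,3)[OF th] by blast
  qed
  then show ?thesis unfolding v_def N_def by auto
qed

lemma capillary_support_bound:
  fixes X :: "'a::euclidean_space \<Rightarrow> 'a"
  assumes th: "0 < \<theta>" "\<theta> \<le> pi / 2" and cp: "capillary_param \<theta> X"
    and hX: "\<forall>\<xi>\<in>cap \<theta>. h \<xi> = (\<xi> - capc \<theta>) \<bullet> X \<xi>" and pos: "\<forall>\<xi>\<in>cap \<theta>. h \<xi> > 0"
    and xi: "\<xi> \<in> cap \<theta>" and x: "x \<in> cap \<theta>"
  shows "(\<xi> - capc \<theta>) \<bullet> X x \<le> h \<xi>"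
proof -
  have "continuous_on (cap \<theta>) (\<lambda>x. (\<xi> - capc \<theta>) \<bullet> X x)"
    by (intro continuous_intros continuous_on_capillary_param[OF cp])
  then obtain \<eta> where eta: "\<eta> \<in> cap \<theta>" "\<forall>x\<in>cap \<theta>. (\<xi> - capc \<theta>) \<bullet> X x \<le> (\<xi> - capc \<theta>) \<bullet> X \<eta>"
    using continuous_attains_sup[OF compact_cap cap_nonempty] by blast
  have "(\<xi> - capc \<theta>) \<bullet> X \<eta> \<le> h \<xi>"
    using support_max_normal[OF th cp xi eta]
  proof
    assume "\<xi> - capc \<theta> = \<eta> - capc \<theta>"
    then show ?thesis using hX xi by simp
  next
    assume "\<xi> - capc \<theta> = - (\<eta> - capc \<theta>)"
    then have "(\<xi> - capc \<theta>) \<bullet> X \<eta> = - h \<eta>" using hX eta(1) by (simp only: inner_minus_left)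
    then show ?thesis using pos xi eta(1) by (metis neg_less_0_iff_less less_trans order_less_imp_le)
  qed
  then show ?thesis using eta(2) x by (blast intro: order_trans)
qed

text \<open>From a point of the region above level M, the ray in direction v stays in the open half
  space and misses S, so it lies in an unbounded component.\<close>
lemma hat_region_halfspace:
  fixes v :: "'a::euclidean_space"
  assumes ve: "v \<bullet> capE \<le> 0" and v0: "v \<noteq> 0" and M: "\<forall>x\<in>S. v \<bullet> x \<le> M"
  shows "hat_region S \<subseteq> {y. v \<bullet> y \<le> M}"
proof -
  define H where "H = {x::'a. x \<bullet> capE < 0}"
  have "v \<bullet> z \<le> M" if C: "C \<in> components (H - S)" "bounded C" and z: "z \<in> C" for C z
  proof (rule ccontr)
    assume "\<not> v \<bullet> z \<le> M"
    have zH: "z \<in> H - S" using in_components_subset[OF C(1)] z by blast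
    define R where "R = (\<lambda>t::real. z + t *\<^sub>R v) ` {0..}"
    have "connected R" unfolding R_def
      by (intro connected_continuous_image convex_connected convex_real_interval continuous_intros)
    moreover have "R \<subseteq> H - S"
    proof
      fix p assume "p \<in> R"
      then obtain t where t: "t \<ge> 0" "p = z + t *\<^sub>R v" unfolding R_def by auto
      have "p \<bullet> capE \<le> z \<bullet> capE" using t ve by (simp add: inner_add_left mult_nonneg_nonpos)
      then have "p \<in> H" using zH unfolding H_def by simp
      moreover have "v \<bullet> p \<ge> v \<bullet> z" using t by (simp add: inner_add_right)
      then have "p \<notin> S" using M \<open>\<not> v \<bullet> z \<le> M\<close> by force
      ultimately show "p \<in> H - S" by simp
    qed
    moreover have "z \<in> R" unfolding R_def by (rule image_eqI[of _ _ 0]) auto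
    ultimately have "R \<subseteq> C" using components_maximal[OF C(1)] z by blast
    obtain B where B: "\<forall>x\<in>C. norm x \<le> B" using C(2) unfolding bounded_iff by blast
    define t where "t = (\<bar>B\<bar> + norm z + 1) / norm v"
    have "t \<ge> 0" "t * norm v = \<bar>B\<bar> + norm z + 1" unfolding t_def using v0 by simp_all
    moreover have "z + t *\<^sub>R v \<in> C" using \<open>R \<subseteq> C\<close> \<open>t \<ge> 0\<close> unfolding R_def by auto
    then have "norm (z + t *\<^sub>R v) \<le> B" using B by blast
    moreover have "norm (t *\<^sub>R v) \<le> norm (z + t *\<^sub>R v) + norm z"
      using norm_triangle_ineq4[of "z + t *\<^sub>R v" z] by simp
    ultimately show False by simp
  qed
  then have "\<Union>{C \<in> components (H - S). bounded C} \<subseteq> {y. v \<bullet> y \<le> M}" by blast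
  then show ?thesis unfolding hat_region_def H_def
    by (rule closure_minimal) (rule closed_halfspace_le)
qed

text \<open>Apply the half space bound to the point of the capillary ball C_{r,\<theta>}(x0) with outer
  normal \<xi> - cos \<theta> e.\<close>
lemma cap_ball_support_bound:
  fixes X :: "'a::euclidean_space \<Rightarrow> 'a"
  assumes th: "0 < \<theta>" "\<theta> \<le> pi / 2" and cp: "capillary_param \<theta> X"
    and hX: "\<forall>\<xi>\<in>cap \<theta>. h \<xi> = (\<xi> - capc \<theta>) \<bullet> X \<xi>" and pos: "\<forall>\<xi>\<in>cap \<theta>. h \<xi> > 0"
    and xi: "\<xi> \<in> cap \<theta>" and r: "r > 0" and x0: "x0 \<bullet> capE = 0"
    and sub: "cap_ball \<theta> r x0 \<subseteq> hat_region (X ` cap \<theta>)"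
  shows "(\<xi> - capc \<theta>) \<bullet> x0 + r * cos \<theta> * ((\<xi> - capc \<theta>) \<bullet> capE) + r \<le> h \<xi>"
proof -
  define N where "N = \<xi> - capc \<theta>"
  define y where "y = x0 + (r * cos \<theta>) *\<^sub>R capE + r *\<^sub>R N"
  have NN: "N \<bullet> N = 1" and Ne: "N \<bullet> capE = \<xi> \<bullet> capE - cos \<theta>"
    using cap_memD(2,4)[OF xi] unfolding N_def by simp_all
  have "y \<bullet> capE = r * cos \<theta> + r * (N \<bullet> capE)" unfolding y_def using x0 by (simp add: inner_add_left)
  also have "\<dots> = r * (\<xi> \<bullet> capE)" unfolding Ne by (simp add: algebra_simps)
  also have "\<dots> \<le> 0" using r cap_memD(3)[OF xi] by (simp add: mult_nonneg_nonpos)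
  finally have "y \<in> cap_ball \<theta> r x0"
    unfolding cap_ball_def using r cap_memD(1)[OF xi] unfolding y_def N_def by simp
  then have "y \<in> hat_region (X ` cap \<theta>)" using sub by blast
  moreover have "N \<bullet> capE \<le> 0" using Ne cap_memD(3)[OF xi] capillary_angle_bounds(2)[OF th] by simp
  moreover have "N \<noteq> 0" using NN by auto
  moreover have "\<forall>p\<in>X ` cap \<theta>. N \<bullet> p \<le> h \<xi>"
    using capillary_support_bound[OF th cp hX pos xi] unfolding N_def by blast
  ultimately have "N \<bullet> y \<le> h \<xi>" using hat_region_halfspace by blast
  moreover have "N \<bullet> y = N \<bullet> x0 + r * cos \<theta> * (N \<bullet> capE) + r"
    unfolding y_def using NN by (simp add: inner_add_right inner_commute)
  ultimately show ?thesis unfolding N_def by simp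
qed

text \<open>Adding the bounds at \<xi>0 and at its reflection cancels the unknown centre x0.\<close>
lemma cap_ball_radius_bound:
  fixes X :: "'a::euclidean_space \<Rightarrow> 'a"
  assumes th: "0 < \<theta>" "\<theta> \<le> pi / 2" and cp: "capillary_param \<theta> X"
    and hX: "\<forall>\<xi>\<in>cap \<theta>. h \<xi> = (\<xi> - capc \<theta>) \<bullet> X \<xi>" and pos: "\<forall>\<xi>\<in>cap \<theta>. h \<xi> > 0"
    and ev: "capillary_even \<theta> h" and xi: "\<xi>0 \<in> cap \<theta>"
    and r: "r > 0" and x0: "x0 \<bullet> capE = 0" and sub: "cap_ball \<theta> r x0 \<subseteq> hat_region (X ` cap \<theta>)"
  shows "r * (1 - cos \<theta>) \<le> h \<xi>0"
proof -
  define N where "N = \<xi>0 - capc \<theta>"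
  have "N \<bullet> x0 + r * cos \<theta> * (N \<bullet> capE) + r \<le> h \<xi>0"
    using cap_ball_support_bound[OF th cp hX pos xi r x0 sub] unfolding N_def .
  moreover have "- (N \<bullet> x0) + r * cos \<theta> * (N \<bullet> capE) + r \<le> h \<xi>0"
    using cap_ball_support_bound[OF th cp hX pos refl_e_cap(1)[OF xi x0] r x0 sub]
      refl_e_cap(2,3)[OF xi x0] ev xi unfolding capillary_even_def N_def by simp
  moreover have "N \<bullet> capE \<ge> -1"
    using Cauchy_Schwarz_ineq2[of N capE] cap_memD(1)[OF xi] unfolding N_def by (simp add: abs_le_iff)
  then have "r * cos \<theta> * (-1) \<le> r * cos \<theta> * (N \<bullet> capE)"
    using r capillary_angle_bounds(2)[OF th] by (intro mult_left_mono) simp_all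
  ultimately show ?thesis by (simp add: algebra_simps)
qed

text \<open>Sup {} is an unspecified real number, so the bound has to account for it in case no
  capillary ball fits into K.\<close>
lemma rho_minus_le:
  assumes "\<And>r x0. r > 0 \<Longrightarrow> x0 \<bullet> capE = 0 \<Longrightarrow> cap_ball \<theta> r x0 \<subseteq> K \<Longrightarrow> r \<le> B"
  shows "rho_minus K \<theta> \<le> max B (Sup {})"
proof (cases "{r. r > 0 \<and> (\<exists>x0. x0 \<bullet> capE = 0 \<and> cap_ball \<theta> r x0 \<subseteq> K)} = {}")
  case True
  then show ?thesis unfolding rho_minus_def True by simp
next
  case False
  then have "rho_minus K \<theta> \<le> B" unfolding rho_minus_def using assms by (auto intro: cSup_least)
  then show ?thesis by simp
qed

lemma capillary_rho_minus_le:
  fixes X :: "'a::euclidean_space \<Rightarrow> 'a"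
  assumes th: "0 < \<theta>" "\<theta> \<le> pi / 2" and cp: "capillary_param \<theta> X"
    and hX: "\<forall>\<xi>\<in>cap \<theta>. h \<xi> = (\<xi> - capc \<theta>) \<bullet> X \<xi>" and pos: "\<forall>\<xi>\<in>cap \<theta>. h \<xi> > 0"
    and ev: "capillary_even \<theta> h" and xi: "\<xi>0 \<in> cap \<theta>"
  shows "rho_minus (hat_region (X ` cap \<theta>)) \<theta> \<le> max (h \<xi>0 / (1 - cos \<theta>)) (Sup {})"
proof (rule rho_minus_le)
  fix r x0 assume "r > 0" "x0 \<bullet> capE = 0" "cap_ball \<theta> r x0 \<subseteq> hat_region (X ` cap \<theta>)"
  then have "r * (1 - cos \<theta>) \<le> h \<xi>0" by (rule cap_ball_radius_bound[OF th cp hX pos ev xi])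
  then show "r \<le> h \<xi>0 / (1 - cos \<theta>)" using capillary_angle_bounds(3)[OF th] by (simp add: pos_le_divide_eq)
qed

theorem lemma3p2:
  fixes f :: "'a::euclidean_space \<Rightarrow> real" and \<theta> :: real and k :: nat
  assumes "0 < \<theta>" and "\<theta> \<le> pi / 2"
    and "1 \<le> k" and "k \<le> DIM('a) - 2"
    and "smooth_on_cap \<theta> f" and "\<forall>\<xi>\<in>cap \<theta>. f \<xi> > 0"
  shows "\<exists>C>0. \<forall>h :: 'a \<Rightarrow> real.
           smooth_on_cap \<theta> h \<and> (\<forall>\<xi>\<in>cap \<theta>. h \<xi> > 0) \<and> admissible \<theta> h \<and>
           (\<forall>\<xi>\<in>cap \<theta>. sigma_cap \<theta> h (DIM('a) - 1) \<xi> / sigma_cap \<theta> h (DIM('a) - 1 - k) \<xi>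
                         = inverse (f \<xi>)) \<and>
           neumann_bc \<theta> h
           \<longrightarrow> Inf (h ` cap \<theta>) \<le> C \<and>
               (capillary_even \<theta> h \<longrightarrow>
                  (\<forall>X. capillary_param \<theta> X \<and> (\<forall>\<xi>\<in>cap \<theta>. h \<xi> = (\<xi> - capc \<theta>) \<bullet> X \<xi>)
                       \<longrightarrow> rho_minus (hat_region (X ` cap \<theta>)) \<theta> \<le> C))"
proof -
  note th = assms(1,2)
  obtain \<xi>f where \<xi>f: "\<xi>f \<in> cap \<theta>" "\<forall>\<xi>\<in>cap \<theta>. f \<xi>f \<le> f \<xi>"
    using continuous_attains_inf[OF compact_cap cap_nonempty continuous_on_cap_if_smooth[OF assms(5)]]
    by blast
  define C1 where "C1 = max 1 (2 ^ (DIM('a) - 1) / f \<xi>f)"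
  define C where "C = max C1 (max (C1 / (1 - cos \<theta>)) (Sup {}))"
  show ?thesis
  proof (intro exI[of _ C] conjI allI impI)
    show "C > 0" unfolding C_def C1_def by linarith
    fix h :: "'a \<Rightarrow> real"
    assume "smooth_on_cap \<theta> h \<and> (\<forall>\<xi>\<in>cap \<theta>. h \<xi> > 0) \<and> admissible \<theta> h \<and>
      (\<forall>\<xi>\<in>cap \<theta>. sigma_cap \<theta> h (DIM('a) - 1) \<xi> / sigma_cap \<theta> h (DIM('a) - 1 - k) \<xi> = inverse (f \<xi>)) \<and>
      neumann_bc \<theta> h"
    then have sm: "smooth_on_cap \<theta> h" and pos: "\<forall>\<xi>\<in>cap \<theta>. h \<xi> > 0" and nb: "neumann_bc \<theta> h"
      and eq: "\<forall>\<xi>\<in>cap \<theta>. sigma_cap \<theta> h (DIM('a) - 1) \<xi> / sigma_cap \<theta> h (DIM('a) - 1 - k) \<xi>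
                 = inverse (f \<xi>)"
      by auto
    obtain \<xi>0 where \<xi>0: "\<xi>0 \<in> cap \<theta>" "\<forall>\<xi>\<in>cap \<theta>. h \<xi>0 \<le> h \<xi>"
      using continuous_attains_inf[OF compact_cap cap_nonempty continuous_on_cap_if_smooth[OF sm]] by blast
    have "h \<xi>0 \<le> C1"
      unfolding C1_def using assms(3,4,6) \<xi>f by (intro neumann_min_le[OF th _ _ sm pos nb \<xi>0 eq]) auto
    moreover have "Inf (h ` cap \<theta>) = h \<xi>0" by (rule cInf_eq_minimum) (use \<xi>0 in auto)
    ultimately show "Inf (h ` cap \<theta>) \<le> C" unfolding C_def by simp
    fix X :: "'a \<Rightarrow> 'a"
    assume "capillary_even \<theta> h" "capillary_param \<theta> X \<and> (\<forall>\<xi>\<in>cap \<theta>. h \<xi> = (\<xi> - capc \<theta>) \<bullet> X \<xi>)"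
    then have "rho_minus (hat_region (X ` cap \<theta>)) \<theta> \<le> max (h \<xi>0 / (1 - cos \<theta>)) (Sup {})"
      using capillary_rho_minus_le[OF th _ _ pos _ \<xi>0(1)] by blast
    moreover have "h \<xi>0 / (1 - cos \<theta>) \<le> C1 / (1 - cos \<theta>)"
      using \<open>h \<xi>0 \<le> C1\<close> capillary_angle_bounds(3)[OF th] by (simp add: divide_right_mono)
    ultimately show "rho_minus (hat_region (X ` cap \<theta>)) \<theta> \<le> C"
      unfolding C_def by (auto simp: max_def split: if_split_asm)
  qed
qed

end
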